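(* Assume $-1\in\mathbb F^2$ and let $J=JCK(Z,\delta)$, $K=Z\oplus Zy$, and $\Phi:K\to\mathrm{Der}(J)^{[\bar1,\bar1]}$, $f+gy\mapsto D(v_1,fv_2)+\sqrt{-1}D(v_3,gy)$. For $\partial\in\mathrm{Der}(J)^{[\bar0,\bar0]}$, the bracket $[\partial,\Phi(z)]$ lies in $\Phi(K)$ for all $z\in K$ and $\Phi^*(\partial):z\mapsto\Phi^{-1}([\partial,\Phi(z)])$ is a derivation of $K$. The map $\Phi^*:\mathrm{Der}(J)^{[\bar0,\bar0]}\to\mathrm{Der}(K)$ is a Lie superalgebra isomorphism onto $\overline{\mathrm{Der}}(K)$, and it maps $\mathrm{Inder}(J)^{[\bar0,\bar0]}$ onto $\mathrm{Inder}(K)$. Hence $\mathrm{Der}(J)^{[\bar0,\bar0]}\cong\overline{\mathrm{Der}}(K)$ and $\mathrm{Inder}(J)^{[\bar0,\bar0]}\cong\mathrm{Inder}(K)$.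
   Context: Let $\mathbb F$ be a field of characteristic $\neq 2$ with $-1\in\mathbb F^2$, $Z$ a unital commutative associative $\mathbb F$-algebra, and $\delta$ a derivation of $Z$ such that $Z\delta(Z)=Z$ (the $\mathbb F$-span of all products $f\delta(g)$, $f,g\in Z$, is $Z$). The Cheng-Kac Jordan superalgebra $J=JCK(Z,\delta)=J_{\bar0}\oplus J_{\bar1}$ is defined as follows: $J_{\bar0}=Z1\oplus Zw_1\oplus Zw_2\oplus Zw_3$ and $J_{\bar1}=Zx\oplus Zx_1\oplus Zx_2\oplus Zx_3$ are free $Z$-modules of rank 4; $J_{\bar0}$ is the $Z$-algebra $(\mathbb F1\oplus\mathbb Fw_1\oplus\mathbb Fw_2\oplus\mathbb Fw_3)\otimes_{\mathbb F}Z$ with $1$ the identity, $w_1^2=w_2^2=1$, $w_3^2=-1$, $w_iw_j=0$ for $i\ne j$. For $f,g\in Z$ and $i,j\in\{1,2,3\}$ the remaining products are: $f(gx)=(fg)x$, $f(gx_j)=(fg)x_j$, $(fw_i)(gx)=(\delta(f)g)x_i$, $(fw_i)(gx_j)=-(fg)x_{i\times j}$, $(fx)(gx)=\delta(f)g-f\delta(g)$, $(fx)(gx_j)=-(fg)w_j$, $(fx_i)(gx)=(fg)w_i$, $(fx_i)(gx_j)=0$, extended by supercommutativity ($ab=(-1)^{|a||b|}ba$), where $x_{1\times2}=-x_{2\times1}=x_3$, $x_{1\times3}=-x_{3\times1}=x_2$, $x_{3\times2}=-x_{2\times3}=x_1$, $x_{i\times i}=0$. $J$ is $\mathbb Z_2^2$-graded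 by $J^{[\bar0,\bar0]}=Z\oplus Zx$, $J^{[\bar1,\bar0]}=Zw_1\oplus Zx_1$, $J^{[\bar0,\bar1]}=Zw_2\oplus Zx_2$, $J^{[\bar1,\bar1]}=Zw_3\oplus Zx_3$, and $\mathrm{Der}(J)^{\alpha}$ (resp. $\mathrm{Inder}(J)^\alpha$) denotes the (super) derivations (resp. inner derivations) mapping each $J^{\beta}$ into $J^{\alpha+\beta}$. $D(a,b)$ is $c\mapsto a(bc)-(-1)^{|a||b|}b(ac)$ and $\mathrm{Inder}$ is the span of all $D(a,b)$. Fix $\sqrt{-1}\in\mathbb F$ and set $v_1=\sqrt{-1}w_1$, $v_2=\sqrt{-1}w_2$, $v_3=w_3$, $y=x$. $K=Z\oplus Zy$ is a subalgebra of $J$. For $a\in Z$, $\eta_a$ is the odd derivation of $K$ with $\eta_a(Z)=0$, $\eta_a(y)=a$; $\overline{\mathrm{Der}}(K)$ is the subalgebra $\mathrm{Der}(K)_{\bar0}\oplus\{\eta_a:a\in Z\}$ of $\mathrm{Der}(K)$. *)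

theory Defs
  imports "HOL-Library.Function_Algebras" "HOL-Library.FuncSet"
begin

text \<open>The ground field F is a type 'f::field,
 the unital commutative associative F-algebra Z is a type 'z::comm_ring_1 together with the
 structure ring homomorphism iota : F -> Z (scalar multiplication c.z = iota c * z).
 Elements of J are coordinate functions basis => 'z w.r.t. the free Z-basis
 1, w1, w2, w3, x, x1, x2, x3.\<close>

datatype idx = I1 | I2 | I3
datatype basis = One | W idx | X0 | Xs idx

type_synonym 'z jel = "basis \<Rightarrow> 'z"

definition basis_set :: "basis set" where
  "basis_set = {One, W I1, W I2, W I3, X0, Xs I1, Xs I2, Xs I3}"

definition elem :: "basis \<Rightarrow> 'z::zero \<Rightarrow> 'z jel" where
  "elem b f = (\<lambda>i. if i = b then f else 0)"

fun wsq :: "idx \<Rightarrow> 'z::comm_ring_1" where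
  "wsq I1 = 1" | "wsq I2 = 1" | "wsq I3 = -1"

fun xcross :: "idx \<Rightarrow> idx \<Rightarrow> 'z::comm_ring_1 \<Rightarrow> 'z jel" where
  "xcross I1 I2 g = elem (Xs I3) g"
| "xcross I2 I1 g = elem (Xs I3) (- g)"
| "xcross I1 I3 g = elem (Xs I2) g"
| "xcross I3 I1 g = elem (Xs I2) (- g)"
| "xcross I3 I2 g = elem (Xs I1) g"
| "xcross I2 I3 g = elem (Xs I1) (- g)"
| "xcross _ _ g = 0"

fun bprod :: "('z::comm_ring_1 \<Rightarrow> 'z) \<Rightarrow> 'z \<Rightarrow> basis \<Rightarrow> 'z \<Rightarrow> basis \<Rightarrow> 'z jel" where
  "bprod \<delta> f One g b' = elem b' (f * g)"
| "bprod \<delta> f (W i) g One = elem (W i) (f * g)"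
| "bprod \<delta> f (W i) g (W j) = (if i = j then elem One (wsq i * (f * g)) else 0)"
| "bprod \<delta> f (W i) g X0 = elem (Xs i) (\<delta> f * g)"
| "bprod \<delta> f (W i) g (Xs j) = - xcross i j (f * g)"
| "bprod \<delta> f X0 g One = elem X0 (f * g)"
| "bprod \<delta> f X0 g (W i) = elem (Xs i) (\<delta> g * f)"
| "bprod \<delta> f X0 g X0 = elem One (\<delta> f * g - f * \<delta> g)"
| "bprod \<delta> f X0 g (Xs j) = elem (W j) (- (f * g))"
| "bprod \<delta> f (Xs i) g One = elem (Xs i) (f * g)"
| "bprod \<delta> f (Xs i) g (W j) = - xcross j i (f * g)"
| "bprod \<delta> f (Xs i) g X0 = elem (W i) (f * g)"
| "bprod \<delta> f (Xs i) g (Xs j) = 0"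

definition jmult :: "('z::comm_ring_1 \<Rightarrow> 'z) \<Rightarrow> 'z jel \<Rightarrow> 'z jel \<Rightarrow> 'z jel" where
  "jmult \<delta> a c = (\<Sum>b\<in>basis_set. \<Sum>b'\<in>basis_set. bprod \<delta> (a b) b (c b') b')"

fun odd_b :: "basis \<Rightarrow> bool" where
  "odd_b One = False" | "odd_b (W _) = False" | "odd_b X0 = True" | "odd_b (Xs _) = True"

definition Jpar :: "bool \<Rightarrow> ('z::zero) jel set" where
  "Jpar p = {a. \<forall>b. odd_b b \<noteq> p \<longrightarrow> a b = 0}"

definition P0 :: "('z::zero) jel \<Rightarrow> 'z jel" where
  "P0 a = (\<lambda>b. if odd_b b then 0 else a b)"
definition P1 :: "('z::zero) jel \<Rightarrow> 'z jel" where
  "P1 a = (\<lambda>b. if odd_b b then a b else 0)"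

definition ssign :: "bool \<Rightarrow> bool \<Rightarrow> 'z::comm_ring_1" where
  "ssign p q = (if p \<and> q then -1 else 1)"

definition zmul :: "'z::comm_ring_1 \<Rightarrow> 'z jel \<Rightarrow> 'z jel" where
  "zmul z a = (\<lambda>b. z * a b)"

definition scal :: "('f \<Rightarrow> 'z::comm_ring_1) \<Rightarrow> 'f \<Rightarrow> 'z jel \<Rightarrow> 'z jel" where
  "scal \<iota> k a = (\<lambda>b. \<iota> k * a b)"

fun deg :: "basis \<Rightarrow> bool \<times> bool" where
  "deg One = (False, False)" | "deg X0 = (False, False)"
| "deg (W I1) = (True, False)" | "deg (Xs I1) = (True, False)"
| "deg (W I2) = (False, True)" | "deg (Xs I2) = (False, True)"
| "deg (W I3) = (True, True)" | "deg (Xs I3) = (True, True)"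

definition Jdeg :: "bool \<times> bool \<Rightarrow> ('z::zero) jel set" where
  "Jdeg \<alpha> = {a. \<forall>b. deg b \<noteq> \<alpha> \<longrightarrow> a b = 0}"

definition gadd :: "bool \<times> bool \<Rightarrow> bool \<times> bool \<Rightarrow> bool \<times> bool" where
  "gadd \<alpha> \<beta> = (fst \<alpha> \<noteq> fst \<beta>, snd \<alpha> \<noteq> snd \<beta>)"

definition sder_on :: "('f \<Rightarrow> 'z::comm_ring_1) \<Rightarrow> ('z \<Rightarrow> 'z) \<Rightarrow> 'z jel set \<Rightarrow> bool
    \<Rightarrow> ('z jel \<Rightarrow> 'z jel) \<Rightarrow> bool" where
  "sder_on \<iota> \<delta> S p d \<longleftrightarrow>
     (\<forall>a\<in>S. \<forall>c\<in>S. d (a + c) = d a + d c) \<and>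
     (\<forall>k. \<forall>a\<in>S. d (scal \<iota> k a) = scal \<iota> k (d a)) \<and>
     (\<forall>q. \<forall>a\<in>S \<inter> Jpar q. d a \<in> S \<inter> Jpar (p \<noteq> q)) \<and>
     (\<forall>q r. \<forall>a\<in>S \<inter> Jpar q. \<forall>c\<in>S \<inter> Jpar r.
        d (jmult \<delta> a c) = jmult \<delta> (d a) c + zmul (ssign p q) (jmult \<delta> a (d c)))"

definition Der_on :: "('f \<Rightarrow> 'z::comm_ring_1) \<Rightarrow> ('z \<Rightarrow> 'z) \<Rightarrow> 'z jel set
    \<Rightarrow> ('z jel \<Rightarrow> 'z jel) set" where
  "Der_on \<iota> \<delta> S = {restrict (\<lambda>a. d0 a + d1 a) S | d0 d1.
      sder_on \<iota> \<delta> S False d0 \<and> sder_on \<iota> \<delta> S True d1}"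

definition ev_map :: "('z::comm_monoid_add jel \<Rightarrow> 'z jel) \<Rightarrow> 'z jel \<Rightarrow> 'z jel" where
  "ev_map D = (\<lambda>a. P0 (D (P0 a)) + P1 (D (P1 a)))"
definition od_map :: "('z::comm_monoid_add jel \<Rightarrow> 'z jel) \<Rightarrow> 'z jel \<Rightarrow> 'z jel" where
  "od_map D = (\<lambda>a. P1 (D (P0 a)) + P0 (D (P1 a)))"

definition sbr :: "('z::comm_ring_1 jel \<Rightarrow> 'z jel) \<Rightarrow> ('z jel \<Rightarrow> 'z jel) \<Rightarrow> 'z jel \<Rightarrow> 'z jel" where
  "sbr D E = (\<lambda>a.
      ev_map D (ev_map E a) - ev_map E (ev_map D a)
    + ev_map D (od_map E a) - od_map E (ev_map D a)
    + od_map D (ev_map E a) - ev_map E (od_map D a)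
    + od_map D (od_map E a) + od_map E (od_map D a))"

definition Dop :: "('z::comm_ring_1 \<Rightarrow> 'z) \<Rightarrow> bool \<Rightarrow> bool \<Rightarrow> 'z jel \<Rightarrow> 'z jel \<Rightarrow> 'z jel \<Rightarrow> 'z jel" where
  "Dop \<delta> p q a b = (\<lambda>c. jmult \<delta> a (jmult \<delta> b c) - zmul (ssign p q) (jmult \<delta> b (jmult \<delta> a c)))"

definition Fspan :: "('f \<Rightarrow> 'z::comm_ring_1) \<Rightarrow> 'z jel set \<Rightarrow> ('z jel \<Rightarrow> 'z jel) set
    \<Rightarrow> ('z jel \<Rightarrow> 'z jel) set" where
  "Fspan \<iota> S X = {restrict (\<lambda>a. \<Sum>i<n. scal \<iota> (c i) (Ds i a)) S | (n::nat) c Ds. \<forall>i<n. Ds i \<in> X}"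

definition InderJ :: "('f \<Rightarrow> 'z::comm_ring_1) \<Rightarrow> ('z \<Rightarrow> 'z) \<Rightarrow> ('z jel \<Rightarrow> 'z jel) set" where
  "InderJ \<iota> \<delta> = Fspan \<iota> UNIV {Dop \<delta> p q a b | p q a b. a \<in> Jpar p \<and> b \<in> Jpar q}"

definition deg_map :: "bool \<times> bool \<Rightarrow> ('z::zero jel \<Rightarrow> 'z jel) \<Rightarrow> bool" where
  "deg_map \<alpha> D \<longleftrightarrow> (\<forall>\<beta>. \<forall>a\<in>Jdeg \<beta>. D a \<in> Jdeg (gadd \<alpha> \<beta>))"

definition DerJ_deg :: "('f \<Rightarrow> 'z::comm_ring_1) \<Rightarrow> ('z \<Rightarrow> 'z) \<Rightarrow> bool \<times> bool \<Rightarrow> ('z jel \<Rightarrow> 'z jel) set" where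
  "DerJ_deg \<iota> \<delta> \<alpha> = {D \<in> Der_on \<iota> \<delta> UNIV. deg_map \<alpha> D}"

definition InderJ_deg :: "('f \<Rightarrow> 'z::comm_ring_1) \<Rightarrow> ('z \<Rightarrow> 'z) \<Rightarrow> bool \<times> bool \<Rightarrow> ('z jel \<Rightarrow> 'z jel) set" where
  "InderJ_deg \<iota> \<delta> \<alpha> = {D \<in> InderJ \<iota> \<delta>. deg_map \<alpha> D}"

text \<open>K = Z + Zy, y = x\<close>
definition Kset :: "('z::zero) jel set" where
  "Kset = {a. \<forall>b. b \<noteq> One \<and> b \<noteq> X0 \<longrightarrow> a b = 0}"

definition InderK :: "('f \<Rightarrow> 'z::comm_ring_1) \<Rightarrow> ('z \<Rightarrow> 'z) \<Rightarrow> ('z jel \<Rightarrow> 'z jel) set" where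
  "InderK \<iota> \<delta> = Fspan \<iota> Kset
     {restrict (Dop \<delta> p q a b) Kset | p q a b. a \<in> Kset \<inter> Jpar p \<and> b \<in> Kset \<inter> Jpar q}"

text \<open>eta_a: odd derivation of K with eta_a(Z)=0, eta_a(y)=a, i.e. f + g y maps to g a\<close>
definition eta :: "'z::comm_ring_1 \<Rightarrow> 'z jel \<Rightarrow> 'z jel" where
  "eta a = restrict (\<lambda>z. elem One (z X0 * a)) Kset"

definition DerbarK :: "('f \<Rightarrow> 'z::comm_ring_1) \<Rightarrow> ('z \<Rightarrow> 'z) \<Rightarrow> ('z jel \<Rightarrow> 'z jel) set" where
  "DerbarK \<iota> \<delta> = {restrict (\<lambda>z. d0 z + eta a z) Kset | d0 a. sder_on \<iota> \<delta> Kset False d0}"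

text \<open>v1 = s w1, v2 = s w2, v3 = w3 with s = sqrt(-1); Phi(f + g y) = D(v1, f v2) + s D(v3, g y)\<close>
definition Phi :: "('f \<Rightarrow> 'z::comm_ring_1) \<Rightarrow> ('z \<Rightarrow> 'z) \<Rightarrow> 'f \<Rightarrow> 'z jel \<Rightarrow> 'z jel \<Rightarrow> 'z jel" where
  "Phi \<iota> \<delta> s z = (\<lambda>c.
      Dop \<delta> False False (elem (W I1) (\<iota> s)) (elem (W I2) (z One * \<iota> s)) c
    + scal \<iota> s (Dop \<delta> False True (elem (W I3) 1) (elem X0 (z X0)) c))"

definition PhiStar :: "('f \<Rightarrow> 'z::comm_ring_1) \<Rightarrow> ('z \<Rightarrow> 'z) \<Rightarrow> 'f \<Rightarrow> ('z jel \<Rightarrow> 'z jel)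
    \<Rightarrow> 'z jel \<Rightarrow> 'z jel" where
  "PhiStar \<iota> \<delta> s D = restrict (\<lambda>z. the_inv_into Kset (Phi \<iota> \<delta> s) (sbr D (Phi \<iota> \<delta> s z))) Kset"

end

theory Submission
  imports Defs
begin

(*
  The heart of the argument is a normal form for Der(J)^[0,0]: every such derivation is a
  standard derivation  std_der D h c, where D is an F-linear derivation of Z with
  [D, delta] = 2 h delta (a twisted derivation; D acts on all coordinates, shifted by h on
  x and by -h on the x_i) and c is the odd part x -> c, w_i -> -c x_i.  Conversely every
  standard derivation lies in Der(J)^[0,0].  Writing Phi(f + g y) as an even part in f plus
  sqrt(-1) times an odd part in g, one computes
      [std_der D h c, Phi z] = Phi (std_der D h (-sqrt(-1) c) z),
  so Phi* sends std_der D h c to the restriction of std_der D h (-sqrt(-1) c) to K, and all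
  homomorphism properties reduce to closure of standard derivations under sums, scalars and
  brackets.  The same Leibniz computation on K shows that the even derivations of K are
  restrictions of even standard derivations, while the odd part restricts to eta_a; this
  gives bijectivity onto Der-bar(K).  Finally the inner derivations of degree [0,0] of J,
  and those of K, are exactly the inner standard derivations  inner_std v e  (D = -2 v delta,
  h = delta v).
*)

subsection \<open>Coordinates of the product of J\<close>

lemma elem_apply [simp]: "elem b f b' = (if b' = b then f else 0)"
  by (simp add: elem_def)

lemma jmult_One [simp]: "jmult \<delta> a c One = a One * c One + a (W I1) * c (W I1) + a (W I2) * c (W I2)
   - a (W I3) * c (W I3) + (\<delta> (a X0) * c X0 - a X0 * \<delta> (c X0))"
  by (simp add: jmult_def basis_set_def algebra_simps)
lemma jmult_X0 [simp]: "jmult \<delta> a c X0 = a One * c X0 + a X0 * c One"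
  by (simp add: jmult_def basis_set_def algebra_simps)
lemma jmult_W1 [simp]:
  "jmult \<delta> a c (W I1) = a One * c (W I1) + a (W I1) * c One - a X0 * c (Xs I1) + a (Xs I1) * c X0"
  by (simp add: jmult_def basis_set_def algebra_simps)
lemma jmult_W2 [simp]:
  "jmult \<delta> a c (W I2) = a One * c (W I2) + a (W I2) * c One - a X0 * c (Xs I2) + a (Xs I2) * c X0"
  by (simp add: jmult_def basis_set_def algebra_simps)
lemma jmult_W3 [simp]:
  "jmult \<delta> a c (W I3) = a One * c (W I3) + a (W I3) * c One - a X0 * c (Xs I3) + a (Xs I3) * c X0"
  by (simp add: jmult_def basis_set_def algebra_simps)
lemma jmult_X1 [simp]: "jmult \<delta> a c (Xs I1) = a One * c (Xs I1) + a (Xs I1) * c One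
   + \<delta> (a (W I1)) * c X0 + \<delta> (c (W I1)) * a X0
   - a (W I3) * c (Xs I2) + a (W I2) * c (Xs I3) - a (Xs I2) * c (W I3) + a (Xs I3) * c (W I2)"
  by (simp add: jmult_def basis_set_def algebra_simps)
lemma jmult_X2 [simp]: "jmult \<delta> a c (Xs I2) = a One * c (Xs I2) + a (Xs I2) * c One
   + \<delta> (a (W I2)) * c X0 + \<delta> (c (W I2)) * a X0
   - a (W I1) * c (Xs I3) + a (W I3) * c (Xs I1) - a (Xs I3) * c (W I1) + a (Xs I1) * c (W I3)"
  by (simp add: jmult_def basis_set_def algebra_simps)
lemma jmult_X3 [simp]: "jmult \<delta> a c (Xs I3) = a One * c (Xs I3) + a (Xs I3) * c One
   + \<delta> (a (W I3)) * c X0 + \<delta> (c (W I3)) * a X0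
   - a (W I1) * c (Xs I2) + a (W I2) * c (Xs I1) - a (Xs I2) * c (W I1) + a (Xs I1) * c (W I2)"
  by (simp add: jmult_def basis_set_def algebra_simps)

lemma basis_eight_cases:
  assumes "P One" "P (W I1)" "P (W I2)" "P (W I3)" "P X0" "P (Xs I1)" "P (Xs I2)" "P (Xs I3)"
  shows "P b"
proof (cases b)
  case (W i) then show ?thesis using assms by (cases i) auto
next
  case (Xs i) then show ?thesis using assms by (cases i) auto
qed (use assms in auto)

lemma basis_all: "(\<forall>b. P b) \<longleftrightarrow> P One \<and> P (W I1) \<and> P (W I2) \<and> P (W I3) \<and> P X0
    \<and> P (Xs I1) \<and> P (Xs I2) \<and> P (Xs I3)"
  using basis_eight_cases[of P] by blast

lemma jel_eqI:
  "f One = g One \<Longrightarrow> f (W I1) = g (W I1) \<Longrightarrow> f (W I2) = g (W I2) \<Longrightarrow> f (W I3) = g (W I3)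
  \<Longrightarrow> f X0 = g X0 \<Longrightarrow> f (Xs I1) = g (Xs I1) \<Longrightarrow> f (Xs I2) = g (Xs I2) \<Longrightarrow> f (Xs I3) = g (Xs I3)
  \<Longrightarrow> f = (g :: 'z jel)"
  by (rule ext, rule_tac b=x in basis_eight_cases) auto

lemma elem_add: "elem b ((x::'z::comm_ring_1) + y) = elem b x + elem b y"
  by (rule ext) simp

lemma elem_decomp: "(a::'z::comm_ring_1 jel) = elem One (a One) + elem (W I1) (a (W I1))
   + elem (W I2) (a (W I2)) + elem (W I3) (a (W I3)) + elem X0 (a X0)
   + elem (Xs I1) (a (Xs I1)) + elem (Xs I2) (a (Xs I2)) + elem (Xs I3) (a (Xs I3))"
  by (rule jel_eqI) simp_all

lemma sum_fun_apply: "(\<Sum>i\<in>A. f i) x = (\<Sum>i\<in>A. f i x)"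
  by (induction A rule: infinite_finite_induct) auto

lemma restrict_UNIV_eq: "restrict f UNIV = f"
  by (simp add: restrict_def)

lemma zmul_one [simp]: "zmul 1 a = a" by (simp add: zmul_def)
lemma ssign_False [simp]: "ssign False q = 1" by (simp add: ssign_def)
lemma ssign_True_False [simp]: "ssign True False = 1" by (simp add: ssign_def)
lemma ssign_True_True [simp]: "ssign True True = -1" by (simp add: ssign_def)

subsection \<open>Parity, degree and the subalgebra K\<close>

lemma Jpar_cases:
  assumes "a \<in> Jpar q"
  obtains "q" "a One = 0" "\<And>i. a (W i) = 0" | "\<not> q" "a X0 = 0" "\<And>i. a (Xs i) = 0"
proof (cases q)
  case True
  then show ?thesis using assms that(1) unfolding Jpar_def by simp
next
  case False
  then show ?thesis using assms that(2) unfolding Jpar_def by simp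
qed

lemma Jpar_oddI: "a One = 0 \<Longrightarrow> a (W I1) = 0 \<Longrightarrow> a (W I2) = 0 \<Longrightarrow> a (W I3) = 0 \<Longrightarrow> a \<in> Jpar True"
  unfolding Jpar_def by (auto, case_tac b, auto, case_tac x2, auto)
lemma Jpar_evenI: "a X0 = 0 \<Longrightarrow> a (Xs I1) = 0 \<Longrightarrow> a (Xs I2) = 0 \<Longrightarrow> a (Xs I3) = 0 \<Longrightarrow> a \<in> Jpar False"
  unfolding Jpar_def by (auto, case_tac b, auto, case_tac x4, auto)

lemma elem_Jpar: "elem b f \<in> Jpar (odd_b b)" by (simp add: Jpar_def)
lemma elem_Jdeg: "elem b f \<in> Jdeg (deg b)" by (simp add: Jdeg_def)
lemma Jdeg_zero: "a \<in> Jdeg \<beta> \<Longrightarrow> deg b \<noteq> \<beta> \<Longrightarrow> a b = 0" by (simp add: Jdeg_def)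

text \<open>Each degree component of J has Z-rank two: an even and an odd basis vector.\<close>

fun partner :: "basis \<Rightarrow> basis" where
  "partner One = X0" | "partner X0 = One" | "partner (W i) = Xs i" | "partner (Xs i) = W i"

lemma same_parity_degree: "odd_b b' = odd_b b \<Longrightarrow> deg b' = deg b \<Longrightarrow> b' = b"
proof -
  have "\<forall>b b'. odd_b b' = odd_b b \<longrightarrow> deg b' = deg b \<longrightarrow> b' = b" by (simp only: basis_all) simp
  then show "odd_b b' = odd_b b \<Longrightarrow> deg b' = deg b \<Longrightarrow> b' = b" by blast
qed
lemma other_parity_degree: "odd_b b' \<noteq> odd_b b \<Longrightarrow> deg b' = deg b \<Longrightarrow> b' = partner b"
proof -
  have "\<forall>b b'. odd_b b' \<noteq> odd_b b \<longrightarrow> deg b' = deg b \<longrightarrow> b' = partner b" by (simp only: basis_all) simp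
  then show "odd_b b' \<noteq> odd_b b \<Longrightarrow> deg b' = deg b \<Longrightarrow> b' = partner b" by blast
qed

lemma gadd_zero [simp]: "gadd (False, False) \<beta> = \<beta>"
  by (cases \<beta>) (simp add: gadd_def)

lemma deg_mapI:
  fixes M :: "'z::zero jel \<Rightarrow> 'z jel"
  assumes "\<And>p1 p2 a. (\<And>b. deg b \<noteq> (p1, p2) \<Longrightarrow> a b = 0)
      \<Longrightarrow> \<forall>b. deg b \<noteq> gadd \<alpha> (p1, p2) \<longrightarrow> M a b = 0"
  shows "deg_map \<alpha> M"
  unfolding deg_map_def
proof (intro allI ballI)
  fix \<beta> and a :: "'z jel" assume a: "a \<in> Jdeg \<beta>"
  obtain p1 p2 where \<beta>: "\<beta> = (p1, p2)" by fastforce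
  show "M a \<in> Jdeg (gadd \<alpha> \<beta>)"
    using assms[of p1 p2 a] a unfolding \<beta> Jdeg_def by simp
qed

text \<open>An additive degree-preserving map is its own
  degree-preserving part; this is how the degree condition on inner derivations is used.\<close>
definition deg_part :: "bool \<times> bool \<Rightarrow> 'z::zero jel \<Rightarrow> 'z jel" where
  "deg_part \<beta> c = (\<lambda>b. if deg b = \<beta> then c b else 0)"
definition deg_proj :: "('z::zero jel \<Rightarrow> 'z jel) \<Rightarrow> 'z jel \<Rightarrow> 'z jel" where
  "deg_proj M = (\<lambda>c b. M (deg_part (deg b) c) b)"

lemma deg_proj_id:
  fixes D :: "'z::comm_ring_1 jel \<Rightarrow> 'z jel"
  assumes add: "\<And>x y. D (x + y) = D x + D y" and dm: "deg_map (False, False) D"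
  shows "deg_proj D = D"
proof (intro ext)
  fix x :: "'z jel" and b
  have zero: "D (deg_part \<beta> x) b' = 0" if "deg b' \<noteq> \<beta>" for \<beta> b'
  proof -
    have "deg_part \<beta> x \<in> Jdeg \<beta>" by (simp add: deg_part_def Jdeg_def)
    then have "D (deg_part \<beta> x) \<in> Jdeg \<beta>" using dm unfolding deg_map_def by (metis gadd_zero)
    then show ?thesis using that Jdeg_zero by blast
  qed
  have "x = deg_part (False, False) x + deg_part (True, False) x + deg_part (False, True) x
      + deg_part (True, True) x"
    by (intro jel_eqI) (simp_all add: deg_part_def)
  then have "D x b = D (deg_part (False, False) x) b + D (deg_part (True, False) x) b
      + D (deg_part (False, True) x) b + D (deg_part (True, True) x) b"
    by (metis add plus_fun_apply)
  moreover obtain p1 p2 where d: "deg b = (p1, p2)" by (cases "deg b")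
  ultimately show "deg_proj D x b = D x b" unfolding deg_proj_def
    by (cases p1; cases p2; simp add: zero d)
qed

lemma Kset_zero: "z \<in> Kset \<Longrightarrow> z (W i) = 0 \<and> z (Xs i) = 0" by (simp add: Kset_def)
lemma Kset_add: "(x::'z::comm_ring_1 jel) \<in> Kset \<Longrightarrow> y \<in> Kset \<Longrightarrow> x + y \<in> Kset" by (simp add: Kset_def)
lemma elem_Kset: "elem One f \<in> Kset" "elem X0 f \<in> Kset" by (simp_all add: Kset_def)
lemma Kset_decomp: "(z::'z::comm_ring_1 jel) \<in> Kset \<Longrightarrow> z = elem One (z One) + elem X0 (z X0)"
  by (intro jel_eqI) (auto simp: Kset_def)

lemma P0_Kset: "x \<in> Kset \<Longrightarrow> P0 x \<in> Kset" by (simp add: Kset_def P0_def)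
lemma P1_Kset: "x \<in> Kset \<Longrightarrow> P1 x \<in> Kset" by (simp add: Kset_def P1_def)

text \<open>Even and odd parts of maps preserving K only see K, so they commute with restriction.\<close>

lemma ev_map_Kset:
  fixes F :: "'z::comm_ring_1 jel \<Rightarrow> 'z jel"
  assumes "\<And>z. z \<in> Kset \<Longrightarrow> F z \<in> Kset" "z \<in> Kset" shows "ev_map F z \<in> Kset"
proof -
  have "F (P0 z) \<in> Kset" "F (P1 z) \<in> Kset" using assms P0_Kset P1_Kset by auto
  then show ?thesis unfolding ev_map_def by (intro Kset_add P0_Kset P1_Kset)
qed
lemma od_map_Kset:
  fixes F :: "'z::comm_ring_1 jel \<Rightarrow> 'z jel"
  assumes "\<And>z. z \<in> Kset \<Longrightarrow> F z \<in> Kset" "z \<in> Kset" shows "od_map F z \<in> Kset"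
proof -
  have "F (P0 z) \<in> Kset" "F (P1 z) \<in> Kset" using assms P0_Kset P1_Kset by auto
  then show ?thesis unfolding od_map_def by (intro Kset_add P0_Kset P1_Kset)
qed
lemma ev_map_restrict: "z \<in> Kset \<Longrightarrow> ev_map (restrict F Kset) z = ev_map F z"
  by (simp add: ev_map_def P0_Kset P1_Kset)
lemma od_map_restrict: "z \<in> Kset \<Longrightarrow> od_map (restrict F Kset) z = od_map F z"
  by (simp add: od_map_def P0_Kset P1_Kset)

lemma sbr_restrict:
  fixes F G :: "'z::comm_ring_1 jel \<Rightarrow> 'z jel"
  assumes F: "\<And>z. z \<in> Kset \<Longrightarrow> F z \<in> Kset" and G: "\<And>z. z \<in> Kset \<Longrightarrow> G z \<in> Kset"
    and z: "z \<in> Kset"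
  shows "sbr (restrict F Kset) (restrict G Kset) z = sbr F G z"
proof -
  have k: "ev_map F z \<in> Kset" "od_map F z \<in> Kset" "ev_map G z \<in> Kset" "od_map G z \<in> Kset"
    using ev_map_Kset[OF F z] od_map_Kset[OF F z] ev_map_Kset[OF G z] od_map_Kset[OF G z] by auto
  show ?thesis unfolding sbr_def
    by (simp only: ev_map_restrict[OF z] od_map_restrict[OF z] ev_map_restrict[OF k(1)]
        ev_map_restrict[OF k(2)] ev_map_restrict[OF k(3)] ev_map_restrict[OF k(4)]
        od_map_restrict[OF k(1)] od_map_restrict[OF k(2)] od_map_restrict[OF k(3)] od_map_restrict[OF k(4)])
qed

text \<open>The hypotheses of the theorem: iota makes Z a unital F-algebra, delta is an F-linear
  derivation with Z delta(Z) = Z, char F is not 2, and s is a square root of -1 in F.\<close>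

locale cheng_kac =
  fixes \<iota> :: "'f::field \<Rightarrow> 'z::comm_ring_1" and \<delta> :: "'z \<Rightarrow> 'z" and s :: 'f
  assumes char: "(2::'f) \<noteq> 0"
    and hom1: "\<iota> 1 = 1"
    and hom_add: "\<forall>a b. \<iota> (a + b) = \<iota> a + \<iota> b"
    and hom_mult: "\<forall>a b. \<iota> (a * b) = \<iota> a * \<iota> b"
    and der_add: "\<forall>f g. \<delta> (f + g) = \<delta> f + \<delta> g"
    and der_lin: "\<forall>c f. \<delta> (\<iota> c * f) = \<iota> c * \<delta> f"
    and der_mult: "\<forall>f g. \<delta> (f * g) = \<delta> f * g + f * \<delta> g"
    and span: "\<forall>z. \<exists>(n::nat) c fs gs. z = (\<Sum>i<n. \<iota> (c i) * fs i * \<delta> (gs i))"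
    and sqrt: "s * s = -1"
begin

lemma delta_add [simp]: "\<delta> (f + g) = \<delta> f + \<delta> g" using der_add by blast
lemma delta_mult [simp]: "\<delta> (f * g) = \<delta> f * g + f * \<delta> g" using der_mult by blast
lemma delta_scal [simp]: "\<delta> (\<iota> c * f) = \<iota> c * \<delta> f" using der_lin by blast
lemma delta_zero [simp]: "\<delta> 0 = 0" using delta_add[of 0 0] by simp
lemma delta_one [simp]: "\<delta> 1 = 0" using delta_mult[of 1 1] by simp
lemma delta_neg [simp]: "\<delta> (- f) = - \<delta> f" using delta_add[of "-f" f] by (simp add: add_eq_0_iff2)
lemma delta_diff [simp]: "\<delta> (f - g) = \<delta> f - \<delta> g" using delta_add[of f "-g"] by simp
lemma delta_numeral [simp]: "\<delta> (numeral n) = 0"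
proof (induction n)
  case One then show ?case by simp
next
  case (Bit0 n) then show ?case using delta_add[of "numeral n" "numeral n"] by (simp add: numeral_Bit0)
next
  case (Bit1 n) then show ?case
    using delta_add[of "numeral n" "numeral n"] delta_add[of "numeral n + numeral n" 1]
    by (simp add: numeral_Bit1)
qed
lemma iota_add [simp]: "\<iota> (a + b) = \<iota> a + \<iota> b" using hom_add by blast
lemma iota_mult [simp]: "\<iota> (a * b) = \<iota> a * \<iota> b" using hom_mult by blast
lemma iota_one [simp]: "\<iota> 1 = 1" using hom1 .
lemma iota_zero [simp]: "\<iota> 0 = 0" using iota_add[of 0 0] by simp
lemma iota_neg [simp]: "\<iota> (- a) = - \<iota> a" using iota_add[of "-a" a] by (simp add: add_eq_0_iff2)
lemma delta_iota [simp]: "\<delta> (\<iota> k) = 0" using delta_scal[of k 1] by simp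
lemma sqrt_sq [simp]: "\<iota> s * \<iota> s = -1" using iota_mult[of s s] sqrt by simp
lemma sqrt_sq_mult [simp]: "\<iota> s * (\<iota> s * x) = - x" by (simp flip: mult.assoc)

text \<open>Since 2 is invertible in F, it is cancellable in Z.\<close>
lemma two_cancel:
  assumes "2 * (x::'z) = 0" shows "x = 0"
proof -
  have "(2::'f) * inverse 2 = 1" using char by simp
  then have "\<iota> 2 * \<iota> (inverse 2) = 1" by (metis iota_mult iota_one)
  moreover have "\<iota> 2 = 2" using iota_add[of 1 1] by simp
  ultimately have half: "2 * \<iota> (inverse 2) = 1" by simp
  have "x = (2 * \<iota> (inverse 2)) * x" by (simp only: half mult_1)
  also have "\<dots> = \<iota> (inverse 2) * (2 * x)" by (simp only: mult_ac)
  also have "\<dots> = 0" using assms by simp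
  finally show ?thesis .
qed

text \<open>The hypothesis Z delta(Z) = Z says that the annihilator of delta(Z) is zero.\<close>
lemma annihilator_delta_zero:
  assumes "\<And>g. x * \<delta> g = 0" shows "x = 0"
proof -
  obtain n c fs gs where one: "(1::'z) = (\<Sum>i<(n::nat). \<iota> (c i) * fs i * \<delta> (gs i))"
    using span by blast
  have "x = x * (\<Sum>i<n. \<iota> (c i) * fs i * \<delta> (gs i))" using one by simp
  also have "\<dots> = (\<Sum>i<n. \<iota> (c i) * fs i * (x * \<delta> (gs i)))" unfolding sum_distrib_left
    by (rule sum.cong) (simp_all add: algebra_simps)
  also have "\<dots> = 0" using assms by simp
  finally show ?thesis .
qed

lemma jmult_scalL: "jmult \<delta> (scal \<iota> k a) c = scal \<iota> k (jmult \<delta> a c)"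
  by (rule jel_eqI) (simp_all add: scal_def algebra_simps)
lemma jmult_scalR: "jmult \<delta> a (scal \<iota> k c) = scal \<iota> k (jmult \<delta> a c)"
  by (rule jel_eqI) (simp_all add: scal_def algebra_simps)
lemma jmult_addR: "jmult \<delta> a (x + y) = jmult \<delta> a x + jmult \<delta> a y"
  by (intro jel_eqI) (simp_all add: algebra_simps)

lemma elem_scal: "elem b (\<iota> k * x) = scal \<iota> k (elem b x)"
  by (rule ext) (simp add: scal_def)
lemma scal_one: "scal \<iota> 1 x = x"
  by (simp add: scal_def)

lemma jmult_elem_One: "jmult \<delta> (elem One f) (elem b g) = elem b (f * g)"
  by (rule jel_eqI; rule_tac b=b in basis_eight_cases; simp)
lemma jmult_elem_W_W: "jmult \<delta> (elem (W i) f) (elem (W i) g) = elem One (wsq i * (f * g))"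
  by (rule jel_eqI; cases i; simp)
lemma jmult_elem_X0_Xs: "jmult \<delta> (elem X0 f) (elem (Xs j) g) = elem (W j) (- (f * g))"
  by (rule jel_eqI; cases j; simp)
lemma jmult_elem_X0_X0: "jmult \<delta> (elem X0 f) (elem X0 g) = elem One (\<delta> f * g - f * \<delta> g)"
  by (rule jel_eqI; simp)
lemma jmult_elem_W_X0: "jmult \<delta> (elem (W i) f) (elem X0 g) = elem (Xs i) (\<delta> f * g)"
  by (rule jel_eqI; cases i; simp)

subsection \<open>Twisted derivations of Z\<close>

text \<open>An F-linear derivation D of Z with [D, delta] = 2 h delta.  These are exactly the
  restrictions to Z of even derivations of J (and of K) of degree [0,0].\<close>
definition twisted_der :: "('z \<Rightarrow> 'z) \<Rightarrow> 'z \<Rightarrow> bool" where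
  "twisted_der D h \<longleftrightarrow> (\<forall>x y. D (x + y) = D x + D y) \<and> (\<forall>k x. D (\<iota> k * x) = \<iota> k * D x)
     \<and> (\<forall>x y. D (x * y) = D x * y + x * D y) \<and> (\<forall>x. D (\<delta> x) = \<delta> (D x) + 2 * h * \<delta> x)"

lemma twisted_derD:
  assumes "twisted_der D h"
  shows "D (x + y) = D x + D y" "D (\<iota> k * x) = \<iota> k * D x" "D (x * y) = D x * y + x * D y"
    "D (\<delta> x) = \<delta> (D x) + 2 * h * \<delta> x" "D 0 = 0" "D (- x) = - D x" "D (x - y) = D x - D y"
    "D 1 = 0" "D (\<iota> k) = 0"
proof -
  have add: "\<And>x y. D (x + y) = D x + D y" and mult: "\<And>x y. D (x * y) = D x * y + x * D y"
    and lin: "\<And>k x. D (\<iota> k * x) = \<iota> k * D x"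
    using assms unfolding twisted_der_def by blast+
  show "D (x + y) = D x + D y" "D (x * y) = D x * y + x * D y" "D (\<iota> k * x) = \<iota> k * D x"
    using add mult lin by blast+
  show "D (\<delta> x) = \<delta> (D x) + 2 * h * \<delta> x"
    using assms unfolding twisted_der_def by blast
  show zero: "D 0 = 0" using add[of 0 0] by simp
  show neg: "D (- x) = - D x" for x using add[of "- x" x] zero by (simp add: add_eq_0_iff2)
  show "D (x - y) = D x - D y" using add[of x "- y"] neg[of y] by simp
  show one: "D 1 = 0" using mult[of 1 1] by simp
  show "D (\<iota> k) = 0" using lin[of k 1] one by simp
qed

lemma twisted_der_numeral: assumes "twisted_der D h" shows "D (numeral n) = 0"
proof (induction n)
  case One then show ?case by (simp add: twisted_derD[OF assms])
next
  case (Bit0 n) then show ?case by (simp only: numeral_Bit0 twisted_derD(1)[OF assms]) simp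
next
  case (Bit1 n) then show ?case
    by (simp only: numeral_Bit1 twisted_derD(1)[OF assms] twisted_derD(8)[OF assms]) simp
qed

lemma twisted_der_add:
  assumes "twisted_der D1 h1" "twisted_der D2 h2"
  shows "twisted_der (\<lambda>x. D1 x + D2 x) (h1 + h2)"
  unfolding twisted_der_def by (simp add: twisted_derD[OF assms(1)] twisted_derD[OF assms(2)] algebra_simps)

lemma twisted_der_scal:
  assumes "twisted_der D h"
  shows "twisted_der (\<lambda>x. \<iota> k * D x) (\<iota> k * h)"
  unfolding twisted_der_def by (simp add: twisted_derD[OF assms] algebra_simps)

lemma twisted_der_bracket:
  assumes "twisted_der D1 h1" "twisted_der D2 h2"
  shows "twisted_der (\<lambda>x. D1 (D2 x) - D2 (D1 x)) (D1 h2 - D2 h1)"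
  unfolding twisted_der_def
  by (simp add: twisted_derD[OF assms(1)] twisted_derD[OF assms(2)]
      twisted_der_numeral[OF assms(1)] twisted_der_numeral[OF assms(2)] algebra_simps)

subsection \<open>Standard derivations of degree [0,0]\<close>

definition der_even :: "('z \<Rightarrow> 'z) \<Rightarrow> 'z \<Rightarrow> 'z jel \<Rightarrow> 'z jel" where
  "der_even D h a = (\<lambda>b. case b of One \<Rightarrow> D (a One) | W i \<Rightarrow> D (a (W i))
     | X0 \<Rightarrow> D (a X0) + h * a X0 | Xs i \<Rightarrow> D (a (Xs i)) - h * a (Xs i))"
definition der_odd :: "'z \<Rightarrow> 'z jel \<Rightarrow> 'z jel" where
  "der_odd c a = (\<lambda>b. case b of One \<Rightarrow> a X0 * c | W i \<Rightarrow> 0 | X0 \<Rightarrow> 0 | Xs i \<Rightarrow> - (a (W i) * c))"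
definition std_der :: "('z \<Rightarrow> 'z) \<Rightarrow> 'z \<Rightarrow> 'z \<Rightarrow> 'z jel \<Rightarrow> 'z jel" where
  "std_der D h c = (\<lambda>a. der_even D h a + der_odd c a)"

lemma der_even_leibniz:
  assumes "twisted_der D h"
  shows "der_even D h (jmult \<delta> a c) = jmult \<delta> (der_even D h a) c + jmult \<delta> a (der_even D h c)"
  by (rule jel_eqI) (simp_all add: der_even_def twisted_derD[OF assms] algebra_simps)

lemma der_odd_leibniz:
  assumes "a \<in> Jpar q"
  shows "der_odd c (jmult \<delta> a a') = jmult \<delta> (der_odd c a) a' + zmul (ssign True q) (jmult \<delta> a (der_odd c a'))"
  using assms
  by (cases rule: Jpar_cases) (intro jel_eqI; simp add: der_odd_def zmul_def algebra_simps)+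

lemma sder_onI:
  assumes "\<And>x y. d (x + y) = d x + d y" "\<And>k x. d (scal \<iota> k x) = scal \<iota> k (d x)"
    "\<And>q x. x \<in> Jpar q \<Longrightarrow> d x \<in> Jpar (p \<noteq> q)"
    "\<And>q x y. x \<in> Jpar q \<Longrightarrow> d (jmult \<delta> x y) = jmult \<delta> (d x) y + zmul (ssign p q) (jmult \<delta> x (d y))"
  shows "sder_on \<iota> \<delta> UNIV p d"
  using assms unfolding sder_on_def by auto

lemma sder_on_Kset:
  assumes "sder_on \<iota> \<delta> UNIV p d" "\<And>x. x \<in> Kset \<Longrightarrow> d x \<in> Kset"
  shows "sder_on \<iota> \<delta> Kset p d"
  using assms unfolding sder_on_def by auto

lemma sder_der_even:
  assumes "twisted_der D h" shows "sder_on \<iota> \<delta> UNIV False (der_even D h)"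
proof (rule sder_onI)
  fix q and x :: "'z jel" assume "x \<in> Jpar q"
  then show "der_even D h x \<in> Jpar (False \<noteq> q)"
    by (rule Jpar_cases) (auto intro!: Jpar_oddI Jpar_evenI simp: der_even_def twisted_derD[OF assms])
qed (auto intro!: jel_eqI simp: der_even_def twisted_derD[OF assms] scal_def der_even_leibniz[OF assms]
       algebra_simps)

lemma sder_der_odd: "sder_on \<iota> \<delta> UNIV True (der_odd c)"
proof (rule sder_onI)
  fix q and x :: "'z jel" assume "x \<in> Jpar q"
  then show "der_odd c x \<in> Jpar (True \<noteq> q)"
    by (rule Jpar_cases) (auto intro!: Jpar_oddI Jpar_evenI simp: der_odd_def)
next
  fix q and x y :: "'z jel" assume "x \<in> Jpar q"
  then show "der_odd c (jmult \<delta> x y) = jmult \<delta> (der_odd c x) y + zmul (ssign True q) (jmult \<delta> x (der_odd c y))"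
    by (rule der_odd_leibniz)
qed (auto intro!: jel_eqI simp: der_odd_def scal_def der_odd_leibniz algebra_simps)

lemma der_even_Kset: "x \<in> Kset \<Longrightarrow> twisted_der D h \<Longrightarrow> der_even D h x \<in> Kset"
  unfolding Kset_def der_even_def by (auto split: basis.split simp: twisted_derD)
lemma der_odd_Kset: "x \<in> Kset \<Longrightarrow> der_odd c x \<in> Kset"
  unfolding Kset_def der_odd_def by (auto split: basis.split)
lemma std_der_Kset: "twisted_der D h \<Longrightarrow> z \<in> Kset \<Longrightarrow> std_der D h c z \<in> Kset"
  unfolding std_der_def using der_even_Kset der_odd_Kset Kset_add by blast

lemma std_der_deg:
  assumes "twisted_der D h" shows "deg_map (False, False) (std_der D h c)"
proof (rule deg_mapI)
  fix p1 p2 and a :: "'z jel" assume a: "\<And>b. deg b \<noteq> (p1, p2) \<Longrightarrow> a b = 0"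
  show "\<forall>b. deg b \<noteq> gadd (False, False) (p1, p2) \<longrightarrow> std_der D h c a b = 0"
    by (cases p1; cases p2; simp only: basis_all;
        simp add: a std_der_def der_even_def der_odd_def twisted_derD[OF assms])
qed

lemma std_der_in_DerJ:
  assumes "twisted_der D h" shows "std_der D h c \<in> DerJ_deg \<iota> \<delta> (False, False)"
proof -
  have "std_der D h c \<in> Der_on \<iota> \<delta> UNIV"
    unfolding Der_on_def std_der_def
    by (rule CollectI, rule exI[of _ "der_even D h"], rule exI[of _ "der_odd c"])
      (simp add: restrict_UNIV_eq sder_der_even[OF assms] sder_der_odd)
  then show ?thesis unfolding DerJ_deg_def using std_der_deg[OF assms] by simp
qed

lemma ev_map_std_der: "twisted_der D h \<Longrightarrow> ev_map (std_der D h c) = der_even D h"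
  by (intro ext jel_eqI) (simp_all add: std_der_def ev_map_def P0_def P1_def der_even_def der_odd_def twisted_derD)
lemma od_map_std_der: "twisted_der D h \<Longrightarrow> od_map (std_der D h c) = der_odd c"
  by (intro ext jel_eqI) (simp_all add: std_der_def od_map_def P0_def P1_def der_even_def der_odd_def twisted_derD)

lemma std_der_add:
  "(\<lambda>a. std_der D1 h1 c1 a + std_der D2 h2 c2 a) = std_der (\<lambda>x. D1 x + D2 x) (h1 + h2) (c1 + c2)"
  by (intro ext jel_eqI) (simp_all add: std_der_def der_even_def der_odd_def algebra_simps)

lemma std_der_scal:
  "(\<lambda>a. scal \<iota> k (std_der D h c a)) = std_der (\<lambda>x. \<iota> k * D x) (\<iota> k * h) (\<iota> k * c)"
  by (intro ext jel_eqI) (simp_all add: std_der_def der_even_def der_odd_def scal_def algebra_simps)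

lemma sbr_std_der:
  assumes g1: "twisted_der D1 h1" and g2: "twisted_der D2 h2"
  shows "sbr (std_der D1 h1 c1) (std_der D2 h2 c2)
    = std_der (\<lambda>x. D1 (D2 x) - D2 (D1 x)) (D1 h2 - D2 h1) (D1 c2 - h1 * c2 - (D2 c1 - h2 * c1))"
  unfolding sbr_def ev_map_std_der[OF g1] od_map_std_der[OF g1] ev_map_std_der[OF g2] od_map_std_der[OF g2]
  by (intro ext jel_eqI)
    (simp_all add: std_der_def der_even_def der_odd_def twisted_derD[OF g1] twisted_derD[OF g2] algebra_simps)

subsection \<open>Every derivation of degree [0,0] is standard\<close>

text \<open>Since
  d0 preserves parity and degree and d1 reverses parity and preserves degree, on a basis
  multiple f b they are described by two coordinate functions.\<close>

context
  fixes d0 d1 :: "'z jel \<Rightarrow> 'z jel"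
  assumes add0: "\<And>x y. d0 (x + y) = d0 x + d0 y"
    and scal0: "\<And>k x. d0 (scal \<iota> k x) = scal \<iota> k (d0 x)"
    and par0: "\<And>q x. x \<in> Jpar q \<Longrightarrow> d0 x \<in> Jpar q"
    and leib0: "\<And>q r x y. x \<in> Jpar q \<Longrightarrow> y \<in> Jpar r \<Longrightarrow>
      d0 (jmult \<delta> x y) = jmult \<delta> (d0 x) y + jmult \<delta> x (d0 y)"
    and add1: "\<And>x y. d1 (x + y) = d1 x + d1 y"
    and par1: "\<And>q x. x \<in> Jpar q \<Longrightarrow> d1 x \<in> Jpar (\<not> q)"
    and leib1: "\<And>q r x y. x \<in> Jpar q \<Longrightarrow> y \<in> Jpar r \<Longrightarrow>
      d1 (jmult \<delta> x y) = jmult \<delta> (d1 x) y + zmul (ssign True q) (jmult \<delta> x (d1 y))"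
    and degree: "\<And>\<beta> x. x \<in> Jdeg \<beta> \<Longrightarrow> d0 x + d1 x \<in> Jdeg \<beta>"
begin

definition coord0 :: "basis \<Rightarrow> 'z \<Rightarrow> 'z" where "coord0 b f = d0 (elem b f) b"
definition coord1 :: "basis \<Rightarrow> 'z \<Rightarrow> 'z" where "coord1 b f = d1 (elem b f) (partner b)"

lemma d0_elem: "d0 (elem b f) = elem b (coord0 b f)"
proof (rule ext)
  fix b'
  have p0: "d0 (elem b f) \<in> Jpar (odd_b b)" and p1: "d1 (elem b f) \<in> Jpar (\<not> odd_b b)"
    using par0 par1 elem_Jpar by blast+
  have dg: "d0 (elem b f) + d1 (elem b f) \<in> Jdeg (deg b)" using degree elem_Jdeg .
  show "d0 (elem b f) b' = elem b (coord0 b f) b'"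
  proof (cases "b' = b")
    case True then show ?thesis by (simp add: coord0_def)
  next
    case False
    show ?thesis
    proof (cases "odd_b b' = odd_b b")
      case True
      then have "deg b' \<noteq> deg b" using False same_parity_degree by blast
      then have "(d0 (elem b f) + d1 (elem b f)) b' = 0" using dg Jdeg_zero by blast
      moreover have "d1 (elem b f) b' = 0" using p1 True unfolding Jpar_def by simp
      ultimately show ?thesis using False by simp
    next
      case False
      then show ?thesis using p0 \<open>b' \<noteq> b\<close> unfolding Jpar_def by simp
    qed
  qed
qed

lemma d1_elem: "d1 (elem b f) = elem (partner b) (coord1 b f)"
proof (rule ext)
  fix b'
  have p0: "d0 (elem b f) \<in> Jpar (odd_b b)" and p1: "d1 (elem b f) \<in> Jpar (\<not> odd_b b)"
    using par0 par1 elem_Jpar by blast+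
  have dg: "d0 (elem b f) + d1 (elem b f) \<in> Jdeg (deg b)" using degree elem_Jdeg .
  show "d1 (elem b f) b' = elem (partner b) (coord1 b f) b'"
  proof (cases "b' = partner b")
    case True then show ?thesis by (simp add: coord1_def)
  next
    case False
    show ?thesis
    proof (cases "odd_b b' = odd_b b")
      case True
      then show ?thesis using p1 False unfolding Jpar_def by simp
    next
      case other: False
      then have "deg b' \<noteq> deg b" using False other_parity_degree by blast
      then have "(d0 (elem b f) + d1 (elem b f)) b' = 0" using dg Jdeg_zero by blast
      moreover have "d0 (elem b f) b' = 0" using p0 other unfolding Jpar_def by simp
      ultimately show ?thesis using False by simp
    qed
  qed
qed

lemma coord0_leibniz:
  assumes "jmult \<delta> (elem b f) (elem b' g) = elem b'' u"
  shows "coord0 b'' u = (jmult \<delta> (elem b (coord0 b f)) (elem b' g)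
    + jmult \<delta> (elem b f) (elem b' (coord0 b' g))) b''"
proof -
  have "coord0 b'' u = d0 (jmult \<delta> (elem b f) (elem b' g)) b''" using assms by (simp add: coord0_def)
  also have "\<dots> = (jmult \<delta> (d0 (elem b f)) (elem b' g) + jmult \<delta> (elem b f) (d0 (elem b' g))) b''"
    by (simp add: leib0[OF elem_Jpar elem_Jpar])
  finally show ?thesis by (simp only: d0_elem)
qed

lemma coord1_leibniz:
  assumes "jmult \<delta> (elem b f) (elem b' g) = elem b'' u"
  shows "coord1 b'' u = (jmult \<delta> (elem (partner b) (coord1 b f)) (elem b' g)
     + zmul (ssign True (odd_b b)) (jmult \<delta> (elem b f) (elem (partner b') (coord1 b' g)))) (partner b'')"
proof -
  have "coord1 b'' u = d1 (jmult \<delta> (elem b f) (elem b' g)) (partner b'')"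
    using assms by (simp add: coord1_def)
  also have "\<dots> = (jmult \<delta> (d1 (elem b f)) (elem b' g)
      + zmul (ssign True (odd_b b)) (jmult \<delta> (elem b f) (d1 (elem b' g)))) (partner b'')"
    by (simp add: leib1[OF elem_Jpar elem_Jpar])
  finally show ?thesis by (simp only: d1_elem)
qed

lemma coord0_add: "coord0 b (x + y) = coord0 b x + coord0 b y"
  by (simp add: coord0_def elem_add add0)
lemma coord0_scal: "coord0 b (\<iota> k * x) = \<iota> k * coord0 b x"
  unfolding coord0_def elem_scal scal0 by (simp add: scal_def)
lemma coord0_neg: "coord0 b (- x) = - coord0 b x"
  using coord0_add[of b x "- x"] coord0_add[of b 0 0] by (simp add: eq_neg_iff_add_eq_0)

lemma coord0_One_mult: "coord0 One (f * g) = coord0 One f * g + f * coord0 One g"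
  using coord0_leibniz[OF jmult_elem_One[of f One g]] by simp
lemma coord0_One_one: "coord0 One 1 = 0" "coord0 One (- 1) = 0"
  using coord0_One_mult[of 1 1] coord0_neg[of One 1] by simp_all
lemma coord0_W: "coord0 (W i) f = coord0 One f + f * coord0 (W i) 1"
  using coord0_leibniz[OF jmult_elem_One[of f "W i" 1]] by (cases i) simp_all
lemma coord0_W_one: "coord0 (W i) 1 = 0"
proof -
  have "coord0 One (wsq i * (1 * 1)) = (jmult \<delta> (elem (W i) (coord0 (W i) 1)) (elem (W i) 1)
     + jmult \<delta> (elem (W i) 1) (elem (W i) (coord0 (W i) 1))) One"
    by (rule coord0_leibniz[OF jmult_elem_W_W])
  then have "2 * coord0 (W i) 1 = 0" using coord0_One_one by (cases i) (simp_all add: algebra_simps)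
  then show ?thesis by (rule two_cancel)
qed
lemma coord0_X0: "coord0 X0 f = coord0 One f + f * coord0 X0 1"
  using coord0_leibniz[OF jmult_elem_One[of f X0 1]] by simp
lemma coord0_Xs: "coord0 (Xs i) f = coord0 One f + f * coord0 (Xs i) 1"
  using coord0_leibniz[OF jmult_elem_One[of f "Xs i" 1]] by (cases i) simp_all
lemma coord0_Xs_one: "coord0 (Xs j) 1 = - coord0 X0 1"
proof -
  have "coord0 (W j) (- (1 * 1)) = (jmult \<delta> (elem X0 (coord0 X0 1)) (elem (Xs j) 1)
     + jmult \<delta> (elem X0 1) (elem (Xs j) (coord0 (Xs j) 1))) (W j)"
    by (rule coord0_leibniz[OF jmult_elem_X0_Xs])
  then have "0 = - coord0 X0 1 - coord0 (Xs j) 1"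
    using coord0_W[of j "-1"] coord0_W_one[of j] coord0_One_one by (cases j) simp_all
  then show ?thesis by (simp add: algebra_simps eq_neg_iff_add_eq_0)
qed
lemma coord0_One_delta: "coord0 One (\<delta> f) = \<delta> (coord0 One f) + 2 * coord0 X0 1 * \<delta> f"
proof -
  have "coord0 One (\<delta> f * 1 - f * \<delta> 1) = (jmult \<delta> (elem X0 (coord0 X0 f)) (elem X0 1)
     + jmult \<delta> (elem X0 f) (elem X0 (coord0 X0 1))) One"
    by (rule coord0_leibniz[OF jmult_elem_X0_X0])
  then show ?thesis using coord0_X0[of f] by (simp add: algebra_simps)
qed

lemma twisted_coord0: "twisted_der (coord0 One) (coord0 X0 1)"
  unfolding twisted_der_def using coord0_add coord0_scal coord0_One_mult coord0_One_delta by blast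

text \<open>The odd coordinates: only x -> 1 and w_i -> x_i survive, given by a single c = coord1 x 1;
  this uses Z delta(Z) = Z to kill the remaining coordinates.\<close>

lemma coord1_W: "coord1 (W i) f = f * coord1 (W i) 1"
  using coord1_leibniz[OF jmult_elem_One[of f "W i" 1]] by (cases i) simp_all
lemma coord1_One: "coord1 One f = 0"
proof (rule annihilator_delta_zero)
  fix g
  have "coord1 (W I1) (f * g) = \<delta> g * coord1 One f + f * coord1 (W I1) g"
    using coord1_leibniz[OF jmult_elem_One[of f "W I1" g]] by simp
  then show "coord1 One f * \<delta> g = 0"
    using coord1_W[of I1 "f * g"] coord1_W[of I1 g] by (simp add: algebra_simps)
qed
lemma coord1_X0: "coord1 X0 f = f * coord1 X0 1"
  using coord1_leibniz[OF jmult_elem_One[of f X0 1]] coord1_One by simp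
lemma coord1_Xs: "coord1 (Xs i) f = f * coord1 (Xs i) 1"
  using coord1_leibniz[OF jmult_elem_One[of f "Xs i" 1]] coord1_One by (cases i) simp_all
lemma coord1_Xs_delta: "\<delta> f * coord1 (Xs i) 1 = f * coord1 (W i) 1 + f * coord1 X0 1"
proof -
  have "coord1 (Xs i) (\<delta> f * 1) = (jmult \<delta> (elem (partner (W i)) (coord1 (W i) f)) (elem X0 1)
     + zmul (ssign True (odd_b (W i))) (jmult \<delta> (elem (W i) f) (elem (partner X0) (coord1 X0 1))))
       (partner (Xs i))"
    by (rule coord1_leibniz[OF jmult_elem_W_X0])
  then show ?thesis using coord1_Xs[of i "\<delta> f"] coord1_W[of i f] by (cases i) (simp_all add: algebra_simps)
qed
lemma coord1_W_one: "coord1 (W i) 1 = - coord1 X0 1"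
  using coord1_Xs_delta[of 1 i] by (simp add: eq_neg_iff_add_eq_0 algebra_simps)
lemma coord1_Xs_one: "coord1 (Xs i) 1 = 0"
proof (rule annihilator_delta_zero)
  fix g show "coord1 (Xs i) 1 * \<delta> g = 0"
    using coord1_Xs_delta[of g i] coord1_W_one[of i] by (simp add: algebra_simps)
qed

lemma sum_is_std_der: "d0 a + d1 a = std_der (coord0 One) (coord0 X0 1) (coord1 X0 1) a"
proof -
  have "d0 a + d1 a = d0 (elem One (a One) + elem (W I1) (a (W I1)) + elem (W I2) (a (W I2))
      + elem (W I3) (a (W I3)) + elem X0 (a X0) + elem (Xs I1) (a (Xs I1)) + elem (Xs I2) (a (Xs I2))
      + elem (Xs I3) (a (Xs I3)))
    + d1 (elem One (a One) + elem (W I1) (a (W I1)) + elem (W I2) (a (W I2))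
      + elem (W I3) (a (W I3)) + elem X0 (a X0) + elem (Xs I1) (a (Xs I1)) + elem (Xs I2) (a (Xs I2))
      + elem (Xs I3) (a (Xs I3)))"
    by (subst (1 2) elem_decomp) (rule refl)
  moreover have "coord0 (W i) f = coord0 One f" "coord0 (Xs i) f = coord0 One f - f * coord0 X0 1"
    "coord1 (W i) f = - (f * coord1 X0 1)" "coord1 (Xs i) f = 0" for i f
    using coord0_W coord0_W_one coord0_Xs coord0_Xs_one coord1_W coord1_W_one coord1_Xs coord1_Xs_one
    by simp_all
  ultimately show ?thesis unfolding add0 add1 d0_elem d1_elem
    by (intro jel_eqI) (simp_all add: std_der_def der_even_def der_odd_def coord1_One
        coord1_X0[of "a X0"] coord0_X0[of "a X0"] algebra_simps)
qed

end

lemma DerJ00_iff_std: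
  "D \<in> DerJ_deg \<iota> \<delta> (False, False) \<longleftrightarrow> (\<exists>Dz h c. twisted_der Dz h \<and> D = std_der Dz h c)"
proof
  assume "D \<in> DerJ_deg \<iota> \<delta> (False, False)"
  then obtain d0 d1 where D: "D = (\<lambda>a. d0 a + d1 a)" and s0: "sder_on \<iota> \<delta> UNIV False d0"
    and s1: "sder_on \<iota> \<delta> UNIV True d1" and dm: "deg_map (False, False) D"
    unfolding DerJ_deg_def Der_on_def restrict_UNIV_eq by blast
  have add0: "\<And>x y. d0 (x + y) = d0 x + d0 y" using s0 unfolding sder_on_def by blast
  have scal0: "\<And>k x. d0 (scal \<iota> k x) = scal \<iota> k (d0 x)" using s0 unfolding sder_on_def by blast
  have par0: "\<And>q x. x \<in> Jpar q \<Longrightarrow> d0 x \<in> Jpar q" using s0 unfolding sder_on_def by force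
  have leib0: "\<And>q r x y. x \<in> Jpar q \<Longrightarrow> y \<in> Jpar r \<Longrightarrow>
      d0 (jmult \<delta> x y) = jmult \<delta> (d0 x) y + jmult \<delta> x (d0 y)"
    using s0 unfolding sder_on_def by force
  have add1: "\<And>x y. d1 (x + y) = d1 x + d1 y" using s1 unfolding sder_on_def by blast
  have par1: "\<And>q x. x \<in> Jpar q \<Longrightarrow> d1 x \<in> Jpar (\<not> q)" using s1 unfolding sder_on_def by force
  have leib1: "\<And>q r x y. x \<in> Jpar q \<Longrightarrow> y \<in> Jpar r \<Longrightarrow>
      d1 (jmult \<delta> x y) = jmult \<delta> (d1 x) y + zmul (ssign True q) (jmult \<delta> x (d1 y))"
    using s1 unfolding sder_on_def by blast
  have degree: "\<And>\<beta> x. x \<in> Jdeg \<beta> \<Longrightarrow> d0 x + d1 x \<in> Jdeg \<beta>"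
    using dm unfolding deg_map_def D gadd_zero by blast
  note components = add0 scal0 par0 leib0 add1 par1 leib1 degree
  have "twisted_der (coord0 d0 One) (coord0 d0 X0 1)"
    by (rule twisted_coord0) (fact components)+
  moreover have "d0 a + d1 a = std_der (coord0 d0 One) (coord0 d0 X0 1) (coord1 d1 X0 1) a" for a
    by (rule sum_is_std_der) (fact components)+
  ultimately show "\<exists>Dz h c. twisted_der Dz h \<and> D = std_der Dz h c"
    unfolding D by blast
next
  assume "\<exists>Dz h c. twisted_der Dz h \<and> D = std_der Dz h c"
  then show "D \<in> DerJ_deg \<iota> \<delta> (False, False)" using std_der_in_DerJ by blast
qed

lemma DerJ00E:
  assumes "D \<in> DerJ_deg \<iota> \<delta> (False, False)"
  obtains Dz h c where "twisted_der Dz h" "D = std_der Dz h c"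
  using assms DerJ00_iff_std by blast

subsection \<open>The map Phi\<close>

text \<open>Phi(f + g y) = D(v_1, f v_2) + sqrt(-1) D(v_3, g y) in coordinates: an even part
  depending on f and an odd part depending on g.\<close>
definition Phi_even :: "'z \<Rightarrow> 'z jel \<Rightarrow> 'z jel" where
  "Phi_even f a = (\<lambda>b. case b of One \<Rightarrow> 0
     | W i \<Rightarrow> (case i of I1 \<Rightarrow> - (f * a (W I2)) | I2 \<Rightarrow> f * a (W I1) | I3 \<Rightarrow> 0)
     | X0 \<Rightarrow> 0
     | Xs i \<Rightarrow> (case i of I1 \<Rightarrow> - (f * a (Xs I2)) | I2 \<Rightarrow> f * a (Xs I1) | I3 \<Rightarrow> \<delta> f * a X0))"
definition Phi_odd :: "'z \<Rightarrow> 'z jel \<Rightarrow> 'z jel" where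
  "Phi_odd g a = (\<lambda>b. case b of One \<Rightarrow> g * a (Xs I3)
     | W i \<Rightarrow> (case i of I1 \<Rightarrow> - (g * a (Xs I2)) | I2 \<Rightarrow> g * a (Xs I1) | I3 \<Rightarrow> \<delta> g * a X0 - g * \<delta> (a X0))
     | X0 \<Rightarrow> g * a (W I3)
     | Xs i \<Rightarrow> (case i of I1 \<Rightarrow> - (\<delta> (a (W I2)) * g) | I2 \<Rightarrow> \<delta> (a (W I1)) * g | I3 \<Rightarrow> - (\<delta> (a One) * g)))"

lemma Phi_apply: "Phi \<iota> \<delta> s z c b = Phi_even (z One) c b + \<iota> s * Phi_odd (z X0) c b"
  by (rule basis_eight_cases[of "\<lambda>b. Phi \<iota> \<delta> s z c b = _ b"])
    (simp_all add: Phi_def Dop_def scal_def zmul_def ssign_def Phi_even_def Phi_odd_def algebra_simps)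

lemma Phi_eq: "Phi \<iota> \<delta> s z = (\<lambda>a. Phi_even (z One) a + scal \<iota> s (Phi_odd (z X0) a))"
  by (intro ext) (simp add: Phi_apply scal_def)

lemma ev_map_Phi: "ev_map (Phi \<iota> \<delta> s z) = Phi_even (z One)"
  by (intro ext jel_eqI) (simp_all add: ev_map_def P0_def P1_def Phi_apply Phi_even_def Phi_odd_def)
lemma od_map_Phi: "od_map (Phi \<iota> \<delta> s z) = (\<lambda>a. scal \<iota> s (Phi_odd (z X0) a))"
  by (intro ext jel_eqI) (simp_all add: od_map_def P0_def P1_def Phi_apply Phi_even_def Phi_odd_def scal_def)

lemma sder_Phi_even: "sder_on \<iota> \<delta> UNIV False (Phi_even f)"
proof (rule sder_onI)
  fix q and x :: "'z jel" assume "x \<in> Jpar q"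
  then show "Phi_even f x \<in> Jpar (False \<noteq> q)"
    by (rule Jpar_cases) (auto intro!: Jpar_oddI Jpar_evenI simp: Phi_even_def)
qed (auto intro!: jel_eqI simp: Phi_even_def scal_def algebra_simps)

lemma Phi_odd_leibniz:
  assumes "a \<in> Jpar q"
  shows "Phi_odd g (jmult \<delta> a a') = jmult \<delta> (Phi_odd g a) a' + zmul (ssign True q) (jmult \<delta> a (Phi_odd g a'))"
  using assms
  by (cases rule: Jpar_cases) (intro jel_eqI; simp add: Phi_odd_def zmul_def algebra_simps)+

lemma sder_Phi_odd: "sder_on \<iota> \<delta> UNIV True (\<lambda>a. scal \<iota> s (Phi_odd g a))"
proof (rule sder_onI)
  fix q and x :: "'z jel" assume "x \<in> Jpar q"
  then show "scal \<iota> s (Phi_odd g x) \<in> Jpar (True \<noteq> q)"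
    by (rule Jpar_cases) (auto intro!: Jpar_oddI Jpar_evenI simp: Phi_odd_def scal_def)
next
  fix q and x y :: "'z jel" assume "x \<in> Jpar q"
  moreover have "scal \<iota> k (x + zmul c y) = scal \<iota> k x + zmul c (scal \<iota> k y)" for k c and x y :: "'z jel"
    by (rule ext) (simp add: scal_def zmul_def algebra_simps)
  ultimately show "scal \<iota> s (Phi_odd g (jmult \<delta> x y))
      = jmult \<delta> (scal \<iota> s (Phi_odd g x)) y + zmul (ssign True q) (jmult \<delta> x (scal \<iota> s (Phi_odd g y)))"
    by (simp add: Phi_odd_leibniz jmult_scalL jmult_scalR)
qed (auto intro!: jel_eqI simp: Phi_odd_def scal_def algebra_simps)

lemma Phi_deg: "deg_map (True, True) (Phi \<iota> \<delta> s z)"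
proof (rule deg_mapI)
  fix p1 p2 and a :: "'z jel" assume a: "\<And>b. deg b \<noteq> (p1, p2) \<Longrightarrow> a b = 0"
  show "\<forall>b. deg b \<noteq> gadd (True, True) (p1, p2) \<longrightarrow> Phi \<iota> \<delta> s z a b = 0"
    by (cases p1; cases p2; simp only: basis_all; simp add: a gadd_def Phi_apply Phi_even_def Phi_odd_def)
qed

lemma Phi_in_DerJ: "Phi \<iota> \<delta> s z \<in> DerJ_deg \<iota> \<delta> (True, True)"
proof -
  have "Phi \<iota> \<delta> s z \<in> Der_on \<iota> \<delta> UNIV"
    unfolding Der_on_def
    by (rule CollectI, rule exI[of _ "Phi_even (z One)"], rule exI[of _ "\<lambda>a. scal \<iota> s (Phi_odd (z X0) a)"])
      (simp add: Phi_eq restrict_UNIV_eq sder_Phi_even sder_Phi_odd)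
  then show ?thesis unfolding DerJ_deg_def using Phi_deg by simp
qed

text \<open>Phi is injective on K: f is read off from Phi(z)(w_1), and sqrt(-1) g from Phi(z)(x_3).\<close>
lemma Phi_inj: "inj_on (Phi \<iota> \<delta> s) Kset"
proof (rule inj_onI)
  fix z1 z2 :: "'z jel"
  assume z1: "z1 \<in> Kset" and z2: "z2 \<in> Kset" and eq: "Phi \<iota> \<delta> s z1 = Phi \<iota> \<delta> s z2"
  have "Phi \<iota> \<delta> s z1 (elem (W I1) 1) (W I2) = Phi \<iota> \<delta> s z2 (elem (W I1) 1) (W I2)" using eq by simp
  then have one: "z1 One = z2 One" by (simp add: Phi_apply Phi_even_def Phi_odd_def)
  have "Phi \<iota> \<delta> s z1 (elem (Xs I3) 1) One = Phi \<iota> \<delta> s z2 (elem (Xs I3) 1) One" using eq by simp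
  then have "\<iota> s * (\<iota> s * z1 X0) = \<iota> s * (\<iota> s * z2 X0)" by (simp add: Phi_apply Phi_even_def Phi_odd_def)
  then have x: "z1 X0 = z2 X0" by simp
  show "z1 = z2" using one x Kset_zero[OF z1] Kset_zero[OF z2] by (intro jel_eqI) auto
qed

lemma sbr_std_der_Phi:
  assumes g: "twisted_der D h"
  shows "sbr (std_der D h c) (Phi \<iota> \<delta> s z) = Phi \<iota> \<delta> s (std_der D h (- (\<iota> s * c)) z)"
  unfolding sbr_def ev_map_std_der[OF g] od_map_std_der[OF g] ev_map_Phi od_map_Phi
  by (intro ext jel_eqI)
    (simp_all add: Phi_apply Phi_even_def Phi_odd_def std_der_def der_even_def der_odd_def scal_def
      twisted_derD[OF g] algebra_simps)

lemma sbr_std_der_Phi_in_image: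
  assumes "twisted_der D h" "z \<in> Kset"
  shows "sbr (std_der D h c) (Phi \<iota> \<delta> s z) \<in> Phi \<iota> \<delta> s ` Kset"
  unfolding sbr_std_der_Phi[OF assms(1)] using std_der_Kset[OF assms] by blast

lemma PhiStar_std_der:
  assumes g: "twisted_der D h"
  shows "PhiStar \<iota> \<delta> s (std_der D h c) = restrict (std_der D h (- (\<iota> s * c))) Kset"
proof (rule ext)
  fix z :: "'z jel"
  show "PhiStar \<iota> \<delta> s (std_der D h c) z = restrict (std_der D h (- (\<iota> s * c))) Kset z"
  proof (cases "z \<in> Kset")
    case True
    then show ?thesis
      unfolding PhiStar_def sbr_std_der_Phi[OF g]
      by (simp add: the_inv_into_f_f[OF Phi_inj std_der_Kset[OF g True]])
  next
    case False then show ?thesis by (simp add: PhiStar_def)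
  qed
qed

subsection \<open>Phi* is a homomorphism of Lie superalgebras\<close>

lemma PhiStar_in_Der_K:
  assumes "D \<in> DerJ_deg \<iota> \<delta> (False, False)"
  shows "PhiStar \<iota> \<delta> s D \<in> Der_on \<iota> \<delta> Kset"
proof -
  obtain Dz h c where g: "twisted_der Dz h" and D: "D = std_der Dz h c" using DerJ00E[OF assms] .
  show ?thesis unfolding D PhiStar_std_der[OF g] unfolding Der_on_def std_der_def
    by (rule CollectI, rule exI[of _ "der_even Dz h"], rule exI[of _ "der_odd (- (\<iota> s * c))"])
      (simp add: sder_on_Kset sder_der_even[OF g] sder_der_odd der_even_Kset[OF _ g] der_odd_Kset)
qed

lemma PhiStar_add:
  assumes "D \<in> DerJ_deg \<iota> \<delta> (False, False)" "E \<in> DerJ_deg \<iota> \<delta> (False, False)"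
  shows "PhiStar \<iota> \<delta> s (\<lambda>a. D a + E a) = restrict (\<lambda>z. PhiStar \<iota> \<delta> s D z + PhiStar \<iota> \<delta> s E z) Kset"
proof -
  obtain D1 h1 c1 where g1: "twisted_der D1 h1" and D: "D = std_der D1 h1 c1" using DerJ00E[OF assms(1)] .
  obtain D2 h2 c2 where g2: "twisted_der D2 h2" and E: "E = std_der D2 h2 c2" using DerJ00E[OF assms(2)] .
  show ?thesis
    unfolding D E std_der_add PhiStar_std_der[OF twisted_der_add[OF g1 g2]]
      PhiStar_std_der[OF g1] PhiStar_std_der[OF g2]
    by (intro restrict_ext jel_eqI) (simp_all add: std_der_def der_even_def der_odd_def algebra_simps)
qed

lemma PhiStar_scal:
  assumes "D \<in> DerJ_deg \<iota> \<delta> (False, False)"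
  shows "PhiStar \<iota> \<delta> s (\<lambda>a. scal \<iota> k (D a)) = restrict (\<lambda>z. scal \<iota> k (PhiStar \<iota> \<delta> s D z)) Kset"
proof -
  obtain D1 h1 c1 where g1: "twisted_der D1 h1" and D: "D = std_der D1 h1 c1" using DerJ00E[OF assms] .
  show ?thesis
    unfolding D std_der_scal PhiStar_std_der[OF twisted_der_scal[OF g1]] PhiStar_std_der[OF g1]
    by (intro restrict_ext jel_eqI) (simp_all add: std_der_def der_even_def der_odd_def scal_def algebra_simps)
qed

lemma PhiStar_sbr:
  assumes "D \<in> DerJ_deg \<iota> \<delta> (False, False)" "E \<in> DerJ_deg \<iota> \<delta> (False, False)"
  shows "PhiStar \<iota> \<delta> s (sbr D E) = restrict (sbr (PhiStar \<iota> \<delta> s D) (PhiStar \<iota> \<delta> s E)) Kset"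
proof -
  obtain D1 h1 c1 where g1: "twisted_der D1 h1" and D: "D = std_der D1 h1 c1" using DerJ00E[OF assms(1)] .
  obtain D2 h2 c2 where g2: "twisted_der D2 h2" and E: "E = std_der D2 h2 c2" using DerJ00E[OF assms(2)] .
  have rotate: "- (\<iota> s * (D1 c2 - h1 * c2 - (D2 c1 - h2 * c1))) =
    D1 (- (\<iota> s * c2)) - h1 * (- (\<iota> s * c2)) - (D2 (- (\<iota> s * c1)) - h2 * (- (\<iota> s * c1)))"
    by (simp add: twisted_derD[OF g1] twisted_derD[OF g2] algebra_simps)
  show ?thesis
    unfolding D E sbr_std_der[OF g1 g2] PhiStar_std_der[OF twisted_der_bracket[OF g1 g2]]
      PhiStar_std_der[OF g1] PhiStar_std_der[OF g2]
  proof (rule restrict_ext)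
    fix z :: "'z jel" assume z: "z \<in> Kset"
    show "std_der (\<lambda>x. D1 (D2 x) - D2 (D1 x)) (D1 h2 - D2 h1) (- (\<iota> s * (D1 c2 - h1 * c2 - (D2 c1 - h2 * c1)))) z
      = sbr (restrict (std_der D1 h1 (- (\<iota> s * c1))) Kset) (restrict (std_der D2 h2 (- (\<iota> s * c2))) Kset) z"
      by (simp only: sbr_restrict[OF std_der_Kset[OF g1] std_der_Kset[OF g2] z] sbr_std_der[OF g1 g2] rotate)
  qed
qed

lemma PhiStar_odd_part:
  assumes "D \<in> DerJ_deg \<iota> \<delta> (False, False)" and even: "\<forall>a. od_map D a = 0"
  shows "\<forall>z\<in>Kset. od_map (PhiStar \<iota> \<delta> s D) z = 0"
proof
  obtain Dz h c where g: "twisted_der Dz h" and D: "D = std_der Dz h c" using DerJ00E[OF assms(1)] .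
  have "der_odd c (elem X0 1) One = 0" using even unfolding D od_map_std_der[OF g] by simp
  then have c: "c = 0" by (simp add: der_odd_def)
  fix z :: "'z jel" assume z: "z \<in> Kset"
  have "od_map (PhiStar \<iota> \<delta> s D) z = der_odd (- (\<iota> s * c)) z"
    unfolding D PhiStar_std_der[OF g] od_map_restrict[OF z] od_map_std_der[OF g] ..
  then show "od_map (PhiStar \<iota> \<delta> s D) z = 0"
    using c by (intro ext) (simp add: der_odd_def split: basis.split)
qed

lemma PhiStar_even_part:
  assumes "D \<in> DerJ_deg \<iota> \<delta> (False, False)" and odd: "\<forall>a. ev_map D a = 0"
  shows "\<forall>z\<in>Kset. ev_map (PhiStar \<iota> \<delta> s D) z = 0"
proof
  obtain Dz h c where g: "twisted_der Dz h" and D: "D = std_der Dz h c" using DerJ00E[OF assms(1)] .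
  have "der_even Dz h (elem One f) One = 0" for f using odd unfolding D ev_map_std_der[OF g] by simp
  then have Dz: "Dz f = 0" for f by (simp add: der_even_def)
  have "der_even Dz h (elem X0 1) X0 = 0" using odd unfolding D ev_map_std_der[OF g] by simp
  then have h: "h = 0" by (simp add: der_even_def Dz)
  fix z :: "'z jel" assume z: "z \<in> Kset"
  have "ev_map (PhiStar \<iota> \<delta> s D) z = der_even Dz h z"
    unfolding D PhiStar_std_der[OF g] ev_map_restrict[OF z] ev_map_std_der[OF g] ..
  then show "ev_map (PhiStar \<iota> \<delta> s D) z = 0"
    using Dz h by (intro ext) (simp add: der_even_def split: basis.split)
qed

subsection \<open>Even derivations of K\<close>

text \<open>An even derivation d0 of K = Z + Zy is determined by its values on f 1 and f y, and the
  same Leibniz computations as for J show that it is an even standard derivation on K.\<close>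

context
  fixes d0 :: "'z jel \<Rightarrow> 'z jel"
  assumes even_K: "sder_on \<iota> \<delta> Kset False d0"
begin

definition kcoord :: "basis \<Rightarrow> 'z \<Rightarrow> 'z" where "kcoord b f = d0 (elem b f) b"

lemma K_add: "x \<in> Kset \<Longrightarrow> y \<in> Kset \<Longrightarrow> d0 (x + y) = d0 x + d0 y"
  using even_K unfolding sder_on_def by blast
lemma K_scal: "x \<in> Kset \<Longrightarrow> d0 (scal \<iota> k x) = scal \<iota> k (d0 x)"
  using even_K unfolding sder_on_def by blast
lemma K_leibniz:
  "x \<in> Kset \<Longrightarrow> x \<in> Jpar q \<Longrightarrow> y \<in> Kset \<Longrightarrow> y \<in> Jpar r \<Longrightarrow>
    d0 (jmult \<delta> x y) = jmult \<delta> (d0 x) y + jmult \<delta> x (d0 y)"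
  using even_K unfolding sder_on_def by force

lemma d0_elem_K:
  assumes "b \<in> {One, X0}" shows "d0 (elem b f) = elem b (kcoord b f)"
proof -
  have "elem b f \<in> Kset" using assms elem_Kset by auto
  then have "d0 (elem b f) \<in> Kset \<inter> Jpar (odd_b b)"
    using even_K elem_Jpar[of b f] unfolding sder_on_def by force
  then show ?thesis using assms unfolding kcoord_def by (intro jel_eqI) (auto simp: Kset_def Jpar_def)
qed

lemma kcoord_leibniz:
  assumes "jmult \<delta> (elem b f) (elem b' g) = elem b'' u" "b \<in> {One, X0}" "b' \<in> {One, X0}"
  shows "kcoord b'' u = (jmult \<delta> (d0 (elem b f)) (elem b' g) + jmult \<delta> (elem b f) (d0 (elem b' g))) b''"
proof -
  have "elem b f \<in> Kset" "elem b' g \<in> Kset" using assms(2,3) elem_Kset by auto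
  then show ?thesis unfolding kcoord_def assms(1)[symmetric] using K_leibniz elem_Jpar by metis
qed

lemma kcoord_add:
  assumes "b \<in> {One, X0}" shows "kcoord b (x + y) = kcoord b x + kcoord b y"
proof -
  have "elem b x \<in> Kset" "elem b y \<in> Kset" using assms elem_Kset by auto
  then show ?thesis unfolding kcoord_def elem_add by (simp only: K_add plus_fun_apply)
qed
lemma kcoord_scal:
  assumes "b \<in> {One, X0}" shows "kcoord b (\<iota> k * x) = \<iota> k * kcoord b x"
proof -
  have "elem b x \<in> Kset" using assms elem_Kset by auto
  then show ?thesis unfolding kcoord_def elem_scal by (simp only: K_scal) (simp add: scal_def)
qed

lemma kcoord_X0: "kcoord X0 f = kcoord One f + f * kcoord X0 1"
  using kcoord_leibniz[OF jmult_elem_One[of f X0 1]] by (simp add: d0_elem_K)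

lemma twisted_kcoord: "twisted_der (kcoord One) (kcoord X0 1)"
proof -
  have "kcoord One (f * g) = kcoord One f * g + f * kcoord One g" for f g
    using kcoord_leibniz[OF jmult_elem_One[of f One g]] by (simp add: d0_elem_K)
  moreover have "kcoord One (\<delta> f) = \<delta> (kcoord One f) + 2 * kcoord X0 1 * \<delta> f" for f
    using kcoord_leibniz[OF jmult_elem_X0_X0[of f 1]] kcoord_X0[of f]
    by (simp add: d0_elem_K algebra_simps)
  moreover have "kcoord One (x + y) = kcoord One x + kcoord One y" for x y by (rule kcoord_add) simp
  moreover have "kcoord One (\<iota> k * x) = \<iota> k * kcoord One x" for k x by (rule kcoord_scal) simp
  ultimately show ?thesis unfolding twisted_der_def by blast
qed

lemma even_der_K_is_std: "z \<in> Kset \<Longrightarrow> d0 z = der_even (kcoord One) (kcoord X0 1) z"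
proof -
  assume z: "z \<in> Kset"
  have "d0 z = elem One (kcoord One (z One)) + elem X0 (kcoord X0 (z X0))"
    by (subst Kset_decomp[OF z]) (simp add: K_add elem_Kset d0_elem_K)
  then show ?thesis using z kcoord_X0[of "z X0"]
    by (intro jel_eqI) (auto simp: Kset_def der_even_def twisted_derD[OF twisted_kcoord])
qed

end

lemma der_odd_eta: "z \<in> Kset \<Longrightarrow> der_odd c z = eta c z"
  by (intro jel_eqI) (auto simp: der_odd_def eta_def Kset_def)

subsection \<open>Phi* is a bijection onto Der-bar(K)\<close>

text \<open>Phi* determines D, h (from the values on f 1 and on x) and sqrt(-1) c.\<close>
lemma PhiStar_inj: "inj_on (PhiStar \<iota> \<delta> s) (DerJ_deg \<iota> \<delta> (False, False))"
proof (rule inj_onI)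
  fix D E assume "D \<in> DerJ_deg \<iota> \<delta> (False, False)" "E \<in> DerJ_deg \<iota> \<delta> (False, False)"
    and eq: "PhiStar \<iota> \<delta> s D = PhiStar \<iota> \<delta> s E"
  obtain D1 h1 c1 where g1: "twisted_der D1 h1" and D: "D = std_der D1 h1 c1"
    using DerJ00E[OF \<open>D \<in> _\<close>] .
  obtain D2 h2 c2 where g2: "twisted_der D2 h2" and E: "E = std_der D2 h2 c2"
    using DerJ00E[OF \<open>E \<in> _\<close>] .
  have eqK: "std_der D1 h1 (- (\<iota> s * c1)) z = std_der D2 h2 (- (\<iota> s * c2)) z" if "z \<in> Kset" for z
    using fun_cong[OF eq[unfolded D E PhiStar_std_der[OF g1] PhiStar_std_der[OF g2]], of z] that by simp
  have "D1 f = D2 f" for f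
    using fun_cong[OF eqK[OF elem_Kset(1)[of f]], of One] by (simp add: std_der_def der_even_def der_odd_def)
  then have same_D: "D1 = D2" by blast
  note at_x = fun_cong[OF eqK[OF elem_Kset(2)[of 1]]]
  have "h1 = h2"
    using at_x[of X0] same_D by (simp add: std_der_def der_even_def der_odd_def twisted_derD[OF g2])
  moreover have "\<iota> s * (\<iota> s * c1) = \<iota> s * (\<iota> s * c2)"
    using at_x[of One] same_D by (simp add: std_der_def der_even_def der_odd_def twisted_derD[OF g2])
  then have "c1 = c2" by simp
  ultimately show "D = E" unfolding D E same_D by simp
qed

lemma PhiStar_image: "PhiStar \<iota> \<delta> s ` DerJ_deg \<iota> \<delta> (False, False) = DerbarK \<iota> \<delta>"
proof
  show "PhiStar \<iota> \<delta> s ` DerJ_deg \<iota> \<delta> (False, False) \<subseteq> DerbarK \<iota> \<delta>"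
  proof
    fix x assume "x \<in> PhiStar \<iota> \<delta> s ` DerJ_deg \<iota> \<delta> (False, False)"
    then obtain D where "D \<in> DerJ_deg \<iota> \<delta> (False, False)" and x: "x = PhiStar \<iota> \<delta> s D" by blast
    then obtain Dz h c where g: "twisted_der Dz h" and D: "D = std_der Dz h c" using DerJ00E by blast
    have "x = restrict (\<lambda>z. der_even Dz h z + eta (- (\<iota> s * c)) z) Kset"
      unfolding x D PhiStar_std_der[OF g] by (rule restrict_ext) (simp add: std_der_def der_odd_eta)
    moreover have "sder_on \<iota> \<delta> Kset False (der_even Dz h)"
      by (simp add: sder_on_Kset sder_der_even[OF g] der_even_Kset[OF _ g])
    ultimately show "x \<in> DerbarK \<iota> \<delta>" unfolding DerbarK_def by blast
  qed
next
  show "DerbarK \<iota> \<delta> \<subseteq> PhiStar \<iota> \<delta> s ` DerJ_deg \<iota> \<delta> (False, False)"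
  proof
    fix x assume "x \<in> DerbarK \<iota> \<delta>"
    then obtain d0 a where x: "x = restrict (\<lambda>z. d0 z + eta a z) Kset"
      and d0: "sder_on \<iota> \<delta> Kset False d0"
      unfolding DerbarK_def by blast
    let ?D = "std_der (kcoord d0 One) (kcoord d0 X0 1) (\<iota> s * a)"
    have "PhiStar \<iota> \<delta> s ?D = x"
      unfolding x PhiStar_std_der[OF twisted_kcoord[OF d0]]
      by (rule restrict_ext) (simp add: std_der_def der_odd_eta even_der_K_is_std[OF d0])
    then show "x \<in> PhiStar \<iota> \<delta> s ` DerJ_deg \<iota> \<delta> (False, False)"
      using std_der_in_DerJ[OF twisted_kcoord[OF d0]] by blast
  qed
qed

subsection \<open>Inner derivations\<close>

definition inner_std :: "'z \<Rightarrow> 'z \<Rightarrow> 'z jel \<Rightarrow> 'z jel" where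
  "inner_std v e = std_der (\<lambda>f. - 2 * v * \<delta> f) (\<delta> v) e"

lemma twisted_inner: "twisted_der (\<lambda>f. - 2 * v * \<delta> f) (\<delta> v)"
  unfolding twisted_der_def by (simp add: algebra_simps)

lemma PhiStar_inner_std: "PhiStar \<iota> \<delta> s (inner_std v e) = restrict (inner_std v (- (\<iota> s * e))) Kset"
  unfolding inner_std_def by (rule PhiStar_std_der[OF twisted_inner])

lemma inner_std_add: "inner_std v e x + inner_std v' e' x = inner_std (v + v') (e + e') x"
  by (intro jel_eqI) (simp_all add: inner_std_def std_der_def der_even_def der_odd_def algebra_simps)
lemma inner_std_scal: "scal \<iota> k (inner_std v e x) = inner_std (\<iota> k * v) (\<iota> k * e) x"
  by (intro jel_eqI) (simp_all add: inner_std_def std_der_def der_even_def der_odd_def scal_def algebra_simps)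
lemma inner_std_zero: "inner_std 0 0 x = 0"
  by (intro jel_eqI) (simp_all add: inner_std_def std_der_def der_even_def der_odd_def)

lemma inner_std_sum:
  "(\<Sum>i<(n::nat). scal \<iota> (c i) (inner_std (v i) (e i) x))
    = inner_std (\<Sum>i<n. \<iota> (c i) * v i) (\<Sum>i<n. \<iota> (c i) * e i) x"
  by (induction n) (simp_all add: inner_std_zero inner_std_scal inner_std_add)

lemma inner_std_combination:
  assumes "\<forall>i<n. \<exists>v e. \<forall>z\<in>S. M i z = inner_std v e z"
  shows "\<exists>v e. \<forall>z\<in>S. (\<Sum>i<(n::nat). scal \<iota> (c i) (M i z)) = inner_std v e z"
  using assms
proof (induction n)
  case 0
  show ?case using inner_std_zero by (metis lessThan_0 sum.empty)
next
  case (Suc n)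
  obtain v e where IH: "\<forall>z\<in>S. (\<Sum>i<n. scal \<iota> (c i) (M i z)) = inner_std v e z" using Suc by auto
  obtain v' e' where last: "\<forall>z\<in>S. M n z = inner_std v' e' z" using Suc.prems by blast
  have "\<forall>z\<in>S. (\<Sum>i<Suc n. scal \<iota> (c i) (M i z)) = inner_std (v + \<iota> (c n) * v') (e + \<iota> (c n) * e') z"
    using IH last by (simp add: inner_std_scal inner_std_add)
  then show ?case by blast
qed

lemma deg_proj_sum:
  "deg_proj (\<lambda>x. \<Sum>i<n. scal \<iota> (c i) (M i x)) = (\<lambda>x. \<Sum>i<n. scal \<iota> (c i) (deg_proj (M i) x))"
  by (intro ext) (simp add: deg_proj_def sum_fun_apply scal_def)

lemma Dop_add: "Dop \<delta> p q a b (x + y) = Dop \<delta> p q a b x + Dop \<delta> p q a b y"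
  unfolding Dop_def by (intro ext) (simp add: jmult_addR zmul_def algebra_simps)

text \<open>The [0,0] component of D(a, b) is the inner standard derivation with
  v = a_x b_x (both odd) and e given by the pairing of an even and an odd element.\<close>
definition pairing :: "'z jel \<Rightarrow> 'z jel \<Rightarrow> 'z" where
  "pairing a b = b X0 * \<delta> (a One) + a (W I1) * b (Xs I1) + a (W I2) * b (Xs I2) - a (W I3) * b (Xs I3)"
definition Dop_v :: "bool \<Rightarrow> bool \<Rightarrow> 'z jel \<Rightarrow> 'z jel \<Rightarrow> 'z" where
  "Dop_v p q a b = (if p \<and> q then a X0 * b X0 else 0)"
definition Dop_e :: "bool \<Rightarrow> bool \<Rightarrow> 'z jel \<Rightarrow> 'z jel \<Rightarrow> 'z" where
  "Dop_e p q a b = (if \<not> p \<and> q then pairing a b else if p \<and> \<not> q then - pairing b a else 0)"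

lemma deg_proj_Dop:
  assumes "a \<in> Jpar p" "b \<in> Jpar q"
  shows "deg_proj (Dop \<delta> p q a b) = inner_std (Dop_v p q a b) (Dop_e p q a b)"
  using assms
  by (elim Jpar_cases; intro ext jel_eqI;
      simp add: deg_proj_def deg_part_def Dop_def inner_std_def std_der_def Dop_v_def Dop_e_def
        pairing_def der_even_def der_odd_def zmul_def algebra_simps)

lemma Dop_Kset:
  assumes "a \<in> Kset" "a \<in> Jpar p" "b \<in> Kset" "b \<in> Jpar q" "z \<in> Kset"
  shows "Dop \<delta> p q a b z = inner_std (Dop_v p q a b) (Dop_e p q a b) z"
proof -
  have "a (W i) = 0" "a (Xs i) = 0" "b (W i) = 0" "b (Xs i) = 0" "z (W i) = 0" "z (Xs i) = 0" for i
    using assms Kset_zero by blast+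
  then show ?thesis using assms(2,4)
    by (elim Jpar_cases; intro jel_eqI;
        simp add: Dop_def inner_std_def std_der_def Dop_v_def Dop_e_def pairing_def
          der_even_def der_odd_def zmul_def algebra_simps)
qed

lemma InderJ00_inner_std:
  assumes "D \<in> InderJ_deg \<iota> \<delta> (False, False)"
  obtains v e where "D = inner_std v e"
proof -
  obtain n c Ds where D: "D = (\<lambda>a. \<Sum>i<(n::nat). scal \<iota> (c i) (Ds i a))"
    and Ds: "\<forall>i<n. Ds i \<in> {Dop \<delta> p q a b | p q a b. a \<in> Jpar p \<and> b \<in> Jpar q}"
    and dm: "deg_map (False, False) D"
    using assms unfolding InderJ_deg_def InderJ_def Fspan_def restrict_UNIV_eq by blast
  have "\<forall>i<n. \<exists>v e. \<forall>z\<in>UNIV. deg_proj (Ds i) z = inner_std v e z"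
    using Ds deg_proj_Dop by fastforce
  then obtain v e where ve: "\<forall>z\<in>UNIV. (\<Sum>i<n. scal \<iota> (c i) (deg_proj (Ds i) z)) = inner_std v e z"
    using inner_std_combination[where M = "\<lambda>i. deg_proj (Ds i)" and c = c] by blast
  have additive: "D (x + y) = D x + D y" for x y
  proof -
    have "Ds i (x + y) = Ds i x + Ds i y" if "i < n" for i using Ds that Dop_add by fastforce
    then show ?thesis unfolding D
      by (intro ext) (simp add: sum_fun_apply scal_def sum.distrib distrib_left)
  qed
  have "D = deg_proj D" using deg_proj_id[OF additive dm] by simp
  also have "\<dots> = inner_std v e" unfolding D deg_proj_sum using ve by auto
  finally show ?thesis by (rule that)
qed

lemma InderK_inner_std:
  assumes "x \<in> InderK \<iota> \<delta>"
  obtains v e where "x = restrict (inner_std v e) Kset"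
proof -
  obtain n c Ds where x: "x = restrict (\<lambda>a. \<Sum>i<(n::nat). scal \<iota> (c i) (Ds i a)) Kset"
    and Ds: "\<forall>i<n. Ds i \<in> {restrict (Dop \<delta> p q a b) Kset | p q a b. a \<in> Kset \<inter> Jpar p \<and> b \<in> Kset \<inter> Jpar q}"
    using assms unfolding InderK_def Fspan_def by blast
  have "\<forall>i<n. \<exists>v e. \<forall>z\<in>Kset. Ds i z = inner_std v e z"
    using Ds Dop_Kset by fastforce
  then obtain v e where "\<forall>z\<in>Kset. (\<Sum>i<n. scal \<iota> (c i) (Ds i z)) = inner_std v e z"
    using inner_std_combination[where M = Ds and c = c] by blast
  then have "x = restrict (inner_std v e) Kset" unfolding x by (intro restrict_ext) simp
  then show ?thesis by (rule that)
qed

text \<open>Conversely every inner standard derivation is an F-combination of D(f, x g) and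
  D(x v, x); this again uses Z delta(Z) = Z, now to write e as a sum of f delta(g).\<close>

lemma Dop_even_odd: "Dop \<delta> False True (elem One g) (elem X0 f) = inner_std 0 (f * \<delta> g)"
  by (intro ext jel_eqI)
    (simp_all add: Dop_def inner_std_def std_der_def der_even_def der_odd_def zmul_def algebra_simps)
lemma Dop_odd_odd: "Dop \<delta> True True (elem X0 v) (elem X0 1) = inner_std v 0"
  by (intro ext jel_eqI)
    (simp_all add: Dop_def inner_std_def std_der_def der_even_def der_odd_def zmul_def algebra_simps)

lemma inner_std_generated:
  obtains n c Ds where "inner_std v e = (\<lambda>a. \<Sum>i<(n::nat). scal \<iota> (c i) (Ds i a))"
    "\<forall>i<n. \<exists>g f. Ds i = Dop \<delta> False True (elem One g) (elem X0 f)
      \<or> Ds i = Dop \<delta> True True (elem X0 f) (elem X0 1)"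
proof -
  obtain n c fs gs where e: "e = (\<Sum>i<(n::nat). \<iota> (c i) * fs i * \<delta> (gs i))" using span by blast
  define Ds where "Ds i = (if i < n then Dop \<delta> False True (elem One (gs i)) (elem X0 (fs i))
      else Dop \<delta> True True (elem X0 v) (elem X0 1))" for i
  define c' where "c' i = (if i < n then c i else 1)" for i
  have "inner_std v e x = inner_std (\<Sum>i<n. \<iota> (c i) * 0) (\<Sum>i<n. \<iota> (c i) * (fs i * \<delta> (gs i))) x
      + inner_std v 0 x" for x
    unfolding e by (simp add: inner_std_add mult.assoc)
  also have "\<dots> x = (\<Sum>i<n. scal \<iota> (c i) (inner_std 0 (fs i * \<delta> (gs i)) x)) + inner_std v 0 x" for x
    by (simp only: inner_std_sum)
  also have "\<dots> x = (\<Sum>i<Suc n. scal \<iota> (c' i) (Ds i x))" for x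
    by (simp add: Ds_def c'_def Dop_even_odd Dop_odd_odd scal_one)
  finally have sum_form: "inner_std v e x = (\<Sum>i<Suc n. scal \<iota> (c' i) (Ds i x))" for x .
  have "inner_std v e = (\<lambda>x. \<Sum>i<Suc n. scal \<iota> (c' i) (Ds i x))" by (rule ext, rule sum_form)
  moreover have "\<forall>i<Suc n. \<exists>g f. Ds i = Dop \<delta> False True (elem One g) (elem X0 f)
      \<or> Ds i = Dop \<delta> True True (elem X0 f) (elem X0 1)"
    unfolding Ds_def by auto
  ultimately show ?thesis by (rule that)
qed

lemma inner_std_in_InderJ: "inner_std v e \<in> InderJ_deg \<iota> \<delta> (False, False)"
proof -
  obtain n c Ds where G: "inner_std v e = (\<lambda>a. \<Sum>i<(n::nat). scal \<iota> (c i) (Ds i a))"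
    and Ds: "\<forall>i<n. \<exists>g f. Ds i = Dop \<delta> False True (elem One g) (elem X0 f)
      \<or> Ds i = Dop \<delta> True True (elem X0 f) (elem X0 1)"
    by (rule inner_std_generated)
  have "\<forall>i<n. Ds i \<in> {Dop \<delta> p q a b | p q a b. a \<in> Jpar p \<and> b \<in> Jpar q}"
    using Ds elem_Jpar[of One] elem_Jpar[of X0] by fastforce
  then have "inner_std v e \<in> InderJ \<iota> \<delta>" unfolding InderJ_def Fspan_def G restrict_UNIV_eq by blast
  moreover have "deg_map (False, False) (inner_std v e)"
    unfolding inner_std_def by (rule std_der_deg[OF twisted_inner])
  ultimately show ?thesis unfolding InderJ_deg_def by simp
qed

lemma inner_std_in_InderK: "restrict (inner_std v e) Kset \<in> InderK \<iota> \<delta>"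
proof -
  obtain n c Ds where G: "inner_std v e = (\<lambda>a. \<Sum>i<(n::nat). scal \<iota> (c i) (Ds i a))"
    and Ds: "\<forall>i<n. \<exists>g f. Ds i = Dop \<delta> False True (elem One g) (elem X0 f)
      \<or> Ds i = Dop \<delta> True True (elem X0 f) (elem X0 1)"
    by (rule inner_std_generated)
  have "\<forall>i<n. restrict (Ds i) Kset
      \<in> {restrict (Dop \<delta> p q a b) Kset | p q a b. a \<in> Kset \<inter> Jpar p \<and> b \<in> Kset \<inter> Jpar q}"
    using Ds elem_Jpar[of One] elem_Jpar[of X0] elem_Kset by fastforce
  moreover have "restrict (inner_std v e) Kset
      = restrict (\<lambda>a. \<Sum>i<n. scal \<iota> (c i) (restrict (Ds i) Kset a)) Kset"
    unfolding G by (rule restrict_ext) simp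
  ultimately show ?thesis unfolding InderK_def Fspan_def
    by (intro CollectI exI[of _ n] exI[of _ c] exI[of _ "\<lambda>i. restrict (Ds i) Kset"]) simp
qed

lemma PhiStar_Inder: "PhiStar \<iota> \<delta> s ` InderJ_deg \<iota> \<delta> (False, False) = InderK \<iota> \<delta>"
proof
  show "PhiStar \<iota> \<delta> s ` InderJ_deg \<iota> \<delta> (False, False) \<subseteq> InderK \<iota> \<delta>"
  proof
    fix x assume "x \<in> PhiStar \<iota> \<delta> s ` InderJ_deg \<iota> \<delta> (False, False)"
    then obtain D where D: "D \<in> InderJ_deg \<iota> \<delta> (False, False)" and x: "x = PhiStar \<iota> \<delta> s D"
      by blast
    obtain v e where "D = inner_std v e" using D by (rule InderJ00_inner_std)
    then show "x \<in> InderK \<iota> \<delta>" unfolding x by (simp add: PhiStar_inner_std inner_std_in_InderK)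
  qed
next
  show "InderK \<iota> \<delta> \<subseteq> PhiStar \<iota> \<delta> s ` InderJ_deg \<iota> \<delta> (False, False)"
  proof
    fix x assume "x \<in> InderK \<iota> \<delta>"
    then obtain v e where x: "x = restrict (inner_std v e) Kset" by (rule InderK_inner_std)
    have "x = PhiStar \<iota> \<delta> s (inner_std v (\<iota> s * e))" unfolding x PhiStar_inner_std by simp
    then show "x \<in> PhiStar \<iota> \<delta> s ` InderJ_deg \<iota> \<delta> (False, False)" using inner_std_in_InderJ by blast
  qed
qed

end

theorem proposition6p2:
  fixes \<iota> :: "'f::field \<Rightarrow> 'z::comm_ring_1" and \<delta> :: "'z \<Rightarrow> 'z" and s :: 'f
  assumes char: "(2::'f) \<noteq> 0"
    and hom1: "\<iota> 1 = 1"
    and hom_add: "\<forall>a b. \<iota> (a + b) = \<iota> a + \<iota> b"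
    and hom_mult: "\<forall>a b. \<iota> (a * b) = \<iota> a * \<iota> b"
    and der_add: "\<forall>f g. \<delta> (f + g) = \<delta> f + \<delta> g"
    and der_lin: "\<forall>c f. \<delta> (\<iota> c * f) = \<iota> c * \<delta> f"
    and der_mult: "\<forall>f g. \<delta> (f * g) = \<delta> f * g + f * \<delta> g"
    and span: "\<forall>z. \<exists>(n::nat) c fs gs. z = (\<Sum>i<n. \<iota> (c i) * fs i * \<delta> (gs i))"
    and sqrt: "s * s = -1"
  shows "Phi \<iota> \<delta> s ` Kset \<subseteq> DerJ_deg \<iota> \<delta> (True, True)
    \<and> inj_on (Phi \<iota> \<delta> s) Kset
    \<and> (\<forall>D\<in>DerJ_deg \<iota> \<delta> (False, False). \<forall>z\<in>Kset. sbr D (Phi \<iota> \<delta> s z) \<in> Phi \<iota> \<delta> s ` Kset)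
    \<and> (\<forall>D\<in>DerJ_deg \<iota> \<delta> (False, False). PhiStar \<iota> \<delta> s D \<in> Der_on \<iota> \<delta> Kset)
    \<and> bij_betw (PhiStar \<iota> \<delta> s) (DerJ_deg \<iota> \<delta> (False, False)) (DerbarK \<iota> \<delta>)
    \<and> (\<forall>D\<in>DerJ_deg \<iota> \<delta> (False, False). \<forall>E\<in>DerJ_deg \<iota> \<delta> (False, False).
          PhiStar \<iota> \<delta> s (\<lambda>a. D a + E a)
            = restrict (\<lambda>z. PhiStar \<iota> \<delta> s D z + PhiStar \<iota> \<delta> s E z) Kset)
    \<and> (\<forall>k. \<forall>D\<in>DerJ_deg \<iota> \<delta> (False, False).
          PhiStar \<iota> \<delta> s (\<lambda>a. scal \<iota> k (D a)) = restrict (\<lambda>z. scal \<iota> k (PhiStar \<iota> \<delta> s D z)) Kset)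
    \<and> (\<forall>D\<in>DerJ_deg \<iota> \<delta> (False, False). \<forall>E\<in>DerJ_deg \<iota> \<delta> (False, False).
          PhiStar \<iota> \<delta> s (sbr D E) = restrict (sbr (PhiStar \<iota> \<delta> s D) (PhiStar \<iota> \<delta> s E)) Kset)
    \<and> (\<forall>D\<in>DerJ_deg \<iota> \<delta> (False, False).
          (\<forall>a. od_map D a = 0) \<longrightarrow> (\<forall>z\<in>Kset. od_map (PhiStar \<iota> \<delta> s D) z = 0))
    \<and> (\<forall>D\<in>DerJ_deg \<iota> \<delta> (False, False).
          (\<forall>a. ev_map D a = 0) \<longrightarrow> (\<forall>z\<in>Kset. ev_map (PhiStar \<iota> \<delta> s D) z = 0))
    \<and> PhiStar \<iota> \<delta> s ` InderJ_deg \<iota> \<delta> (False, False) = InderK \<iota> \<delta>"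
proof -
  interpret cheng_kac \<iota> \<delta> s
    using char hom1 hom_add hom_mult der_add der_lin der_mult span sqrt by unfold_locales
  have sbr_in_image: "sbr D (Phi \<iota> \<delta> s z) \<in> Phi \<iota> \<delta> s ` Kset"
    if "D \<in> DerJ_deg \<iota> \<delta> (False, False)" "z \<in> Kset" for D z
    using sbr_std_der_Phi_in_image that by (metis DerJ00E)
  show ?thesis
    using Phi_in_DerJ Phi_inj sbr_in_image PhiStar_in_Der_K PhiStar_inj PhiStar_image
      PhiStar_add PhiStar_scal PhiStar_sbr PhiStar_odd_part PhiStar_even_part PhiStar_Inder
    unfolding bij_betw_def by blast
qed

end
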